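(* Let $X$ be a compact metric space, $\rho$ a Borel probability measure on $X\times Y$ ($Y\subseteq\mathbb{R}$) with marginal $\rho_X$ and regression function $f_\rho$. Let $K$ be a positive-definite continuous reproducing kernel on $X$ such that the closed linear span of $\{K(\cdot,x):x\in X\}$ in $C(X)$ equals $C(X)$. Let $\mathcal{B}=\{f_\mu=\int_X K(t,\cdot)\,d\mu(t):\mu\in\mathcal{M}(X)\}$ with $\|f_\mu\|_{\mathcal B}=\|\mu\|$ (total variation). Let $\{\phi_j\}_{j\in\mathbb{N}}$ be an orthonormal basis of $L^2_{\rho_X}$ of eigenfunctions of $L_K$ with eigenvalues $\lambda_1\ge\lambda_2\ge\cdots$, and suppose $f_\rho=\sum_{j}\lambda_j^s a_j\phi_j$ for some $s>0$ and some $h=\sum_j a_j\phi_j\in L^2_{\rho_X}$. For $\lambda>0$ and $g\in\mathcal{B}$ put $\mathcal{D}(\lambda,g)=\mathcal{E}(g)-\mathcal{E}(f_\rho)+\lambda\|g\|_{\mathcal B}$. Then: if $0<s<1$, $$\inf_{g\in\mathcal{B}}\mathcal{D}(\lambda,g)\le\big(\|h\|_{L^2_{\rho_X}}+\|h\|_{L^2_{\rho_X}}^2\big)\lambda^{\frac{2s}{1+s}};$$ if $s\ge 1$, then $f_\rho\in\mathcal{B}$ and $$\mathcal{D}(\lambda,f_\rho)\le\lambda_1^{s-1}\|h\|_{L^2_{\rho_X}}\,\lambda.$$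
   Context: $\mathcal{M}(X)$ is the space of signed Borel measures on $X$ of bounded total variation. $\mathcal{E}(f)=\int_{X\times Y}|f(x)-y|^2\,d\rho$; $f_\rho(x)=\int_Y y\,d\rho(y|x)$. $L_K$ is the operator on $L^2_{\rho_X}$ defined by $L_Kf=\int_X K(t,\cdot)f(t)\,d\rho_X(t)$. *)

theory Defs
  imports "HOL-Probability.Probability"
begin

definition pos_def_kernel :: "('a \<Rightarrow> 'a \<Rightarrow> real) \<Rightarrow> bool" where
  "pos_def_kernel K \<longleftrightarrow> (\<forall>x y. K x y = K y x) \<and>
     (\<forall>(xs :: 'a list) (c :: real list). length c = length xs \<longrightarrow>
        0 \<le> (\<Sum>i<length xs. \<Sum>j<length xs. c!i * c!j * K (xs!i) (xs!j)))"

definition finite_borel :: "'a::topological_space measure \<Rightarrow> bool" where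
  "finite_borel \<mu> \<longleftrightarrow> finite_measure \<mu> \<and> sets \<mu> = sets (borel :: 'a measure)"

text \<open>A signed Borel measure of bounded variation is represented as a difference
  \<open>\<mu>1 - \<mu>2\<close> of two finite Borel measures (Jordan decomposition).\<close>
definition tot_var :: "'a::topological_space measure \<Rightarrow> 'a measure \<Rightarrow> real" where
  "tot_var \<mu>1 \<mu>2 = Sup {(\<Sum>i<n. \<bar>measure \<mu>1 (A i) - measure \<mu>2 (A i)\<bar>) | (n::nat) A.
      disjoint_family_on A {..<n} \<and> (\<forall>i<n. A i \<in> sets \<mu>1) \<and>
      (\<Union>i<n. A i) = UNIV}"

definition f_meas :: "('a \<Rightarrow> 'a \<Rightarrow> real) \<Rightarrow> 'a measure \<Rightarrow> 'a measure \<Rightarrow> 'a \<Rightarrow> real" where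
  "f_meas K \<mu>1 \<mu>2 x = (\<integral>t. K t x \<partial>\<mu>1) - (\<integral>t. K t x \<partial>\<mu>2)"

definition marginal :: "('a::topological_space \<times> real) measure \<Rightarrow> 'a measure" where
  "marginal \<rho> = distr \<rho> borel fst"

definition ls_error :: "('a \<times> real) measure \<Rightarrow> ('a \<Rightarrow> real) \<Rightarrow> real" where
  "ls_error \<rho> f = (\<integral>z. (f (fst z) - snd z)^2 \<partial>\<rho>)"

text \<open>\<open>f\<close> is (a version of) the regression function \<open>f_\<rho>(x) = \<integral> y d\<rho>(y|x)\<close>, i.e.
  \<open>f_\<rho>(X) = E[Y | X]\<close>.\<close>
definition regression_fun :: "('a::topological_space \<times> real) measure \<Rightarrow> ('a \<Rightarrow> real) \<Rightarrow> bool" where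
  "regression_fun \<rho> f \<longleftrightarrow> f \<in> borel_measurable borel \<and>
     (AE z in \<rho>. f (fst z) = real_cond_exp \<rho> (vimage_algebra (space \<rho>) fst borel) snd z)"

definition sq_int :: "'a measure \<Rightarrow> ('a \<Rightarrow> real) \<Rightarrow> bool" where
  "sq_int \<nu> f \<longleftrightarrow> f \<in> borel_measurable \<nu> \<and> integrable \<nu> (\<lambda>x. (f x)^2)"

definition L2_norm_m :: "'a measure \<Rightarrow> ('a \<Rightarrow> real) \<Rightarrow> real" where
  "L2_norm_m \<nu> f = sqrt (\<integral>x. (f x)^2 \<partial>\<nu>)"

definition L2_onb :: "'a measure \<Rightarrow> (nat \<Rightarrow> 'a \<Rightarrow> real) \<Rightarrow> bool" where
  "L2_onb \<nu> \<phi> \<longleftrightarrow> (\<forall>j. sq_int \<nu> (\<phi> j)) \<and>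
     (\<forall>i j. (\<integral>x. \<phi> i x * \<phi> j x \<partial>\<nu>) = (if i = j then 1 else 0)) \<and>
     (\<forall>g. sq_int \<nu> g \<longrightarrow> (\<forall>e>0. \<exists>n c. L2_norm_m \<nu> (\<lambda>x. g x - (\<Sum>j<n. c j * \<phi> j x)) < e))"

definition int_op :: "('a \<Rightarrow> 'a \<Rightarrow> real) \<Rightarrow> 'a measure \<Rightarrow> ('a \<Rightarrow> real) \<Rightarrow> 'a \<Rightarrow> real" where
  "int_op K \<nu> f x = (\<integral>t. K t x * f t \<partial>\<nu>)"

end

theory Submission
  imports Defs
begin

text \<open>
  Both bounds come from the expansion \<open>f\<^sub>\<rho> = \<Sum>\<^sub>j \<lambda>\<^sub>j\<^sup>s a\<^sub>j \<phi>\<^sub>j\<close>. Every \<open>g \<in> L\<^sup>1(\<rho>\<^sub>X)\<close> gives the measure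
  \<open>d\<mu> = g d\<rho>\<^sub>X\<close> with \<open>f\<^sub>\<mu> = L\<^sub>K g\<close> and \<open>\<parallel>\<mu>\<parallel> \<le> \<parallel>g\<parallel>\<^sub>1 \<le> \<parallel>g\<parallel>\<^sub>2\<close>, while \<open>\<E>(f) - \<E>(f\<^sub>\<rho>) = \<parallel>f - f\<^sub>\<rho>\<parallel>\<^sub>2\<^sup>2\<close>.
  For \<open>s \<ge> 1\<close> the series \<open>g = \<Sum>\<^sub>j \<lambda>\<^sub>j\<^sup>s\<^sup>-\<^sup>1 a\<^sub>j \<phi>\<^sub>j\<close> converges, since its coefficients are dominated by
  \<open>\<lambda>\<^sub>1\<^sup>s\<^sup>-\<^sup>1 \<bar>a\<^sub>j\<bar>\<close>, and \<open>L\<^sub>K g = f\<^sub>\<rho>\<close>. For \<open>s < 1\<close> take the spectral filter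
  \<open>g = \<Sum>\<^sub>j \<lambda>\<^sub>j\<^sup>s a\<^sub>j / (\<lambda>\<^sub>j + t) \<phi>\<^sub>j\<close> with \<open>t = \<lambda>\<^sup>1\<^sup>/\<^sup>(\<^sup>1\<^sup>+\<^sup>s\<^sup>)\<close>: then \<open>\<parallel>L\<^sub>K g - f\<^sub>\<rho>\<parallel>\<^sub>2 \<le> t\<^sup>s \<parallel>h\<parallel>\<close>,
  \<open>\<parallel>g\<parallel>\<^sub>2 \<le> t\<^sup>s\<^sup>-\<^sup>1 \<parallel>h\<parallel>\<close> and \<open>\<lambda> t\<^sup>s\<^sup>-\<^sup>1 = t\<^sup>2\<^sup>s = \<lambda>\<^sup>2\<^sup>s\<^sup>/\<^sup>(\<^sup>1\<^sup>+\<^sup>s\<^sup>)\<close>. The eigenvalues are nonnegative because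
  \<open>K\<close> is positive definite.
\<close>

lemma square_add_le_weighted:
  fixes u v \<eta> :: real
  assumes "0 < \<eta>"
  shows "(u + v)^2 \<le> (1 + \<eta>) * u^2 + (1 + 1 / \<eta>) * v^2"
proof -
  have "0 \<le> (\<eta> * u - v)^2 / \<eta>" using assms by simp
  also have "\<dots> = \<eta> * u^2 - 2 * u * v + v^2 / \<eta>"
    using assms by (simp add: field_simps power2_eq_square)
  finally show ?thesis by (simp add: power2_sum algebra_simps)
qed

lemma powr_filter_le:
  fixes \<mu> t s :: real
  assumes "0 \<le> \<mu>" "0 < t" "0 < s" "s \<le> 1"
  shows "\<mu> powr s * t / (\<mu> + t) \<le> t powr s"
proof (cases "\<mu> \<le> t")
  case True
  have "\<mu> powr s * t / (\<mu> + t) \<le> \<mu> powr s"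
    using assms by (simp add: divide_le_eq mult_left_mono)
  also have "\<dots> \<le> t powr s" using True assms by (intro powr_mono2) auto
  finally show ?thesis .
next
  case False
  have "\<mu> powr s * t / (\<mu> + t) \<le> \<mu> powr s * t / \<mu>"
    using False assms by (intro divide_left_mono) auto
  also have "\<dots> = \<mu> powr (s - 1) * t" using False assms by (simp add: powr_diff)
  also have "\<dots> \<le> t powr (s - 1) * t"
    using powr_mono2'[of "s - 1" t \<mu>] False assms by (intro mult_right_mono) auto
  also have "\<dots> = t powr s" using assms by (simp add: powr_diff)
  finally show ?thesis .
qed

lemma powr_filter_le':
  fixes \<mu> t s :: real
  assumes "0 \<le> \<mu>" "0 < t" "0 < s" "s \<le> 1"
  shows "\<mu> powr s / (\<mu> + t) \<le> t powr (s - 1)"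
  using divide_right_mono[OF powr_filter_le[OF assms], of t] assms
  by (simp add: powr_diff)

section \<open>Square-integrable functions\<close>

lemma integrable_mult_bounded:
  fixes f g :: "'a \<Rightarrow> real"
  assumes "integrable M f" "g \<in> borel_measurable M" "\<And>x. \<bar>g x\<bar> \<le> C"
  shows "integrable M (\<lambda>x. f x * g x)"
proof (rule Bochner_Integration.integrable_bound[of _ "\<lambda>x. C * f x"])
  have "\<bar>f x\<bar> * \<bar>g x\<bar> \<le> \<bar>f x\<bar> * \<bar>C\<bar>" for x
    using assms(3)[of x] by (intro mult_left_mono) auto
  then show "AE x in M. norm (f x * g x) \<le> norm (C * f x)"
    by (simp add: abs_mult mult.commute)
qed (use assms in auto)

lemma abs_integral_mult_diff_le:
  fixes f F G :: "'a \<Rightarrow> real"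
  assumes f: "integrable M f"
    and F: "F \<in> borel_measurable M" "\<And>x. \<bar>F x\<bar> \<le> C"
    and G: "G \<in> borel_measurable M" "\<And>x. \<bar>G x\<bar> \<le> D"
    and FG: "\<And>x. \<bar>F x - G x\<bar> \<le> b"
  shows "\<bar>(\<integral>x. f x * F x \<partial>M) - (\<integral>x. f x * G x \<partial>M)\<bar> \<le> b * (\<integral>x. \<bar>f x\<bar> \<partial>M)"
proof -
  have fF: "integrable M (\<lambda>x. f x * F x)" by (rule integrable_mult_bounded[OF f F])
  have fG: "integrable M (\<lambda>x. f x * G x)" by (rule integrable_mult_bounded[OF f G])
  have "\<bar>(\<integral>x. f x * F x \<partial>M) - (\<integral>x. f x * G x \<partial>M)\<bar> = \<bar>\<integral>x. f x * (F x - G x) \<partial>M\<bar>"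
    using fF fG by (simp add: right_diff_distrib)
  also have "\<dots> \<le> (\<integral>x. \<bar>f x * (F x - G x)\<bar> \<partial>M)" by (rule integral_abs_bound)
  also have "\<dots> \<le> (\<integral>x. b * \<bar>f x\<bar> \<partial>M)"
  proof (rule integral_mono)
    show "integrable M (\<lambda>x. \<bar>f x * (F x - G x)\<bar>)"
      using fF fG by (simp add: right_diff_distrib)
    show "\<bar>f x * (F x - G x)\<bar> \<le> b * \<bar>f x\<bar>" for x
      using mult_left_mono[OF FG[of x], of "\<bar>f x\<bar>"] by (simp add: abs_mult mult.commute)
  qed (use f in simp)
  finally show ?thesis by simp
qed

context prob_space
begin

lemma sq_int_integrable: "sq_int M u \<Longrightarrow> integrable M u"
  unfolding sq_int_def by (auto intro: square_integrable_imp_integrable)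

lemma sq_int_integrable_square: "sq_int M u \<Longrightarrow> integrable M (\<lambda>x. (u x)^2)"
  unfolding sq_int_def by simp

lemma sq_int_integrable_mult:
  assumes "sq_int M u" "sq_int M v"
  shows "integrable M (\<lambda>x. u x * v x)"
proof (rule Bochner_Integration.integrable_bound[of _ "\<lambda>x. (u x)^2 + (v x)^2"])
  show "integrable M (\<lambda>x. (u x)^2 + (v x)^2)" "(\<lambda>x. u x * v x) \<in> borel_measurable M"
    using assms unfolding sq_int_def by auto
  have "\<bar>u x * v x\<bar> \<le> (u x)^2 + (v x)^2" for x
  proof -
    have "2 * \<bar>u x * v x\<bar> \<le> (u x)^2 + (v x)^2"
      using sum_squares_bound[of "\<bar>u x\<bar>" "\<bar>v x\<bar>"] by (simp add: abs_mult mult.assoc)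
    then show ?thesis by simp
  qed
  then show "AE x in M. norm (u x * v x) \<le> norm ((u x)^2 + (v x)^2)" by simp
qed

lemma sq_int_add: "sq_int M u \<Longrightarrow> sq_int M v \<Longrightarrow> sq_int M (\<lambda>x. u x + v x)"
  using sq_int_integrable_mult[of u v] unfolding sq_int_def
  by (auto simp: power2_sum mult.assoc)

lemma sq_int_cmult: "sq_int M u \<Longrightarrow> sq_int M (\<lambda>x. c * u x)"
  unfolding sq_int_def by (auto simp: power_mult_distrib)

lemma sq_int_diff: "sq_int M u \<Longrightarrow> sq_int M v \<Longrightarrow> sq_int M (\<lambda>x. u x - v x)"
  using sq_int_add[of u "\<lambda>x. (-1) * v x"] sq_int_cmult[of v "-1"] by simp

lemma sq_int_sum: "(\<And>j. j \<in> A \<Longrightarrow> sq_int M (f j)) \<Longrightarrow> sq_int M (\<lambda>x. \<Sum>j\<in>A. f j x)"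
proof (induction A rule: infinite_finite_induct)
  case (insert a A)
  then show ?case using sq_int_add[of "f a" "\<lambda>x. \<Sum>j\<in>A. f j x"] by simp
qed (simp_all add: sq_int_def)

lemma sq_int_bounded:
  assumes "f \<in> borel_measurable M" "\<And>x. \<bar>f x\<bar> \<le> C"
  shows "sq_int M f"
proof -
  have "(f x)^2 \<le> C^2" for x
    using power_mono[OF assms(2)[of x], of 2] by (simp add: power2_abs)
  then have "integrable M (\<lambda>x. (f x)^2)"
    using assms(1) by (auto intro: Bochner_Integration.integrable_bound[of _ "\<lambda>_. C^2"])
  then show ?thesis unfolding sq_int_def using assms(1) by simp
qed

lemma integral_abs_le_sqrt_integral_square:
  assumes "sq_int M u"
  shows "(\<integral>x. \<bar>u x\<bar> \<partial>M) \<le> sqrt (\<integral>x. (u x)^2 \<partial>M)"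
proof -
  define m where "m = (\<integral>x. \<bar>u x\<bar> \<partial>M)"
  have "0 \<le> (\<integral>x. (\<bar>u x\<bar> - m)^2 \<partial>M)" by simp
  also have "\<dots> = (\<integral>x. (u x)^2 - 2 * m * \<bar>u x\<bar> + m^2 \<partial>M)"
    by (simp add: power2_diff power2_abs algebra_simps)
  also have "\<dots> = (\<integral>x. (u x)^2 \<partial>M) - m^2"
    using assms sq_int_integrable[OF assms] prob_space unfolding sq_int_def m_def
    by (simp add: power2_eq_square)
  finally show ?thesis unfolding m_def by (simp add: real_le_rsqrt)
qed

lemma integral_square_add_le:
  assumes "sq_int M u" "sq_int M v" "0 < \<eta>"
  shows "(\<integral>x. (u x + v x)^2 \<partial>M) \<le> (1 + \<eta>) * (\<integral>x. (u x)^2 \<partial>M) + (1 + 1 / \<eta>) * (\<integral>x. (v x)^2 \<partial>M)"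
proof -
  have "(\<integral>x. (u x + v x)^2 \<partial>M) \<le> (\<integral>x. (1 + \<eta>) * (u x)^2 + (1 + 1 / \<eta>) * (v x)^2 \<partial>M)"
    using assms sq_int_add[OF assms(1,2)] unfolding sq_int_def
    by (intro integral_mono square_add_le_weighted) auto
  then show ?thesis using assms unfolding sq_int_def by simp
qed

lemma AE_eq_of_uniform_L2_approx:
  assumes F: "sq_int M F" and f: "sq_int M f" and u: "\<And>n. sq_int M (u n)"
    and unif: "\<And>n. AE x in M. \<bar>F x - u n x\<bar> \<le> b n" and b: "b \<longlonglongrightarrow> 0"
    and L2: "(\<lambda>n. \<integral>x. (u n x - f x)^2 \<partial>M) \<longlonglongrightarrow> 0"
  shows "AE x in M. F x = f x"
proof -
  have "(\<integral>x. (F x - f x)^2 \<partial>M) \<le> 2 * (b n)^2 + 2 * (\<integral>x. (u n x - f x)^2 \<partial>M)" for n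
  proof -
    have "(\<integral>x. (F x - f x)^2 \<partial>M) \<le> (\<integral>x. 2 * (b n)^2 + 2 * (u n x - f x)^2 \<partial>M)"
    proof (rule integral_mono_AE)
      show "integrable M (\<lambda>x. (F x - f x)^2)"
        by (rule sq_int_integrable_square[OF sq_int_diff[OF F f]])
      show "integrable M (\<lambda>x. 2 * (b n)^2 + 2 * (u n x - f x)^2)"
        using sq_int_integrable_square[OF sq_int_diff[OF u f]] by simp
      show "AE x in M. (F x - f x)^2 \<le> 2 * (b n)^2 + 2 * (u n x - f x)^2"
        using unif[of n]
      proof eventually_elim
        case (elim x)
        have "(F x - f x)^2 \<le> 2 * (F x - u n x)^2 + 2 * (u n x - f x)^2"
          using square_add_le_weighted[of 1 "F x - u n x" "u n x - f x"] by simp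
        also have "(F x - u n x)^2 \<le> (b n)^2"
          using power_mono[OF elim, of 2] by (simp add: power2_abs)
        finally show ?case by simp
      qed
    qed
    then show ?thesis
      using prob_space sq_int_integrable_square[OF sq_int_diff[OF u f]] by simp
  qed
  moreover have "(\<lambda>n. 2 * (b n)^2 + 2 * (\<integral>x. (u n x - f x)^2 \<partial>M)) \<longlonglongrightarrow> 2 * 0^2 + 2 * 0"
    by (intro tendsto_intros b L2)
  ultimately have "(\<integral>x. (F x - f x)^2 \<partial>M) \<le> 0"
    by (intro LIMSEQ_le_const[of _ 0]) auto
  then have "AE x in M. (F x - f x)^2 = 0"
    using integral_nonneg_eq_0_iff_AE[of M "\<lambda>x. (F x - f x)^2"]
      sq_int_integrable_square[OF sq_int_diff[OF F f]] by (simp add: antisym)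
  then show ?thesis by eventually_elim simp
qed

lemma AE_summable_abs_of_summable_L1:
  fixes d :: "nat \<Rightarrow> 'a \<Rightarrow> real"
  assumes di: "\<And>k. integrable M (d k)" and sm: "summable (\<lambda>k. \<integral>x. \<bar>d k x\<bar> \<partial>M)"
  shows "AE x in M. summable (\<lambda>k. \<bar>d k x\<bar>)"
proof -
  have dm[measurable]: "d k \<in> borel_measurable M" for k using di by auto
  have "(\<integral>\<^sup>+x. (\<Sum>k. ennreal \<bar>d k x\<bar>) \<partial>M) = (\<Sum>k. \<integral>\<^sup>+x. ennreal \<bar>d k x\<bar> \<partial>M)"
    by (rule nn_integral_suminf) measurable
  also have "\<dots> = (\<Sum>k. ennreal (\<integral>x. \<bar>d k x\<bar> \<partial>M))"
    by (intro arg_cong[where f=suminf] ext nn_integral_eq_integral integrable_abs di) auto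
  also have "\<dots> = ennreal (\<Sum>k. \<integral>x. \<bar>d k x\<bar> \<partial>M)"
    by (rule suminf_ennreal2[OF _ sm]) simp
  finally have "(\<integral>\<^sup>+x. (\<Sum>k. ennreal \<bar>d k x\<bar>) \<partial>M) \<noteq> \<infinity>" by simp
  then have "AE x in M. (\<Sum>k. ennreal \<bar>d k x\<bar>) \<noteq> \<infinity>"
    by (intro nn_integral_noteq_infinite) measurable
  then show ?thesis
    by eventually_elim (rule summable_suminf_not_top, auto)
qed

lemma suminf_L1_convergent:
  fixes d :: "nat \<Rightarrow> 'a \<Rightarrow> real"
  assumes di: "\<And>k. integrable M (d k)" and sm: "summable (\<lambda>k. \<integral>x. \<bar>d k x\<bar> \<partial>M)"
  shows "integrable M (\<lambda>x. \<Sum>k. d k x)"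
    and "(\<lambda>n. \<integral>x. \<bar>(\<Sum>k. d k x) - (\<Sum>k<n. d k x)\<bar> \<partial>M) \<longlonglongrightarrow> 0"
proof -
  have [measurable]: "d k \<in> borel_measurable M" for k using di by auto
  have ae: "AE x in M. summable (\<lambda>k. \<bar>d k x\<bar>)" by (rule AE_summable_abs_of_summable_L1[OF di sm])
  show "integrable M (\<lambda>x. \<Sum>k. d k x)"
    by (rule integrable_suminf[OF di]) (use ae sm in auto)
  have iD: "integrable M (\<lambda>x. \<Sum>k. \<bar>d k x\<bar>)"
    by (rule integrable_suminf) (use ae sm di in auto)
  have "(\<lambda>n. \<integral>x. \<bar>(\<Sum>k. d k x) - (\<Sum>k<n. d k x)\<bar> \<partial>M) \<longlonglongrightarrow> (\<integral>x. 0 \<partial>M)"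
  proof (rule integral_dominated_convergence[where w="\<lambda>x. 2 * (\<Sum>k. \<bar>d k x\<bar>)"])
    show "AE x in M. (\<lambda>n. \<bar>(\<Sum>k. d k x) - (\<Sum>k<n. d k x)\<bar>) \<longlonglongrightarrow> 0"
      using ae
    proof eventually_elim
      fix x assume "summable (\<lambda>k. \<bar>d k x\<bar>)"
      then have "(\<lambda>n. \<Sum>k<n. d k x) \<longlonglongrightarrow> (\<Sum>k. d k x)"
        by (rule summable_LIMSEQ[OF summable_rabs_cancel])
      then have "(\<lambda>n. \<bar>(\<Sum>k. d k x) - (\<Sum>k<n. d k x)\<bar>) \<longlonglongrightarrow> \<bar>(\<Sum>k. d k x) - (\<Sum>k. d k x)\<bar>"
        by (intro tendsto_intros)
      then show "(\<lambda>n. \<bar>(\<Sum>k. d k x) - (\<Sum>k<n. d k x)\<bar>) \<longlonglongrightarrow> 0" by simp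
    qed
    show "AE x in M. norm \<bar>(\<Sum>k. d k x) - (\<Sum>k<n. d k x)\<bar> \<le> 2 * (\<Sum>k. \<bar>d k x\<bar>)" for n
      using ae
    proof eventually_elim
      fix x assume s: "summable (\<lambda>k. \<bar>d k x\<bar>)"
      have "\<bar>\<Sum>k<n. d k x\<bar> \<le> (\<Sum>k<n. \<bar>d k x\<bar>)" by (rule sum_abs)
      also have "\<dots> \<le> (\<Sum>k. \<bar>d k x\<bar>)" by (rule sum_le_suminf[OF s]) auto
      finally have "\<bar>\<Sum>k<n. d k x\<bar> \<le> (\<Sum>k. \<bar>d k x\<bar>)" .
      then show "norm \<bar>(\<Sum>k. d k x) - (\<Sum>k<n. d k x)\<bar> \<le> 2 * (\<Sum>k. \<bar>d k x\<bar>)"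
        using summable_rabs[OF s] by simp
    qed
    show "integrable M (\<lambda>x. 2 * (\<Sum>k. \<bar>d k x\<bar>))" using iD by simp
  qed measurable
  then show "(\<lambda>n. \<integral>x. \<bar>(\<Sum>k. d k x) - (\<Sum>k<n. d k x)\<bar> \<partial>M) \<longlonglongrightarrow> 0" by simp
qed

lemma L1_Cauchy_of_L2_Cauchy:
  fixes u :: "nat \<Rightarrow> 'a \<Rightarrow> real"
  assumes u: "\<And>n. sq_int M (u n)"
    and Cauchy: "\<And>e. e > 0 \<Longrightarrow> \<exists>N. \<forall>m\<ge>N. \<forall>n\<ge>N. (\<integral>x. (u m x - u n x)^2 \<partial>M) < e"
    and "e > 0"
  shows "\<exists>N. \<forall>m\<ge>N. \<forall>n\<ge>N. (\<integral>x. \<bar>u m x - u n x\<bar> \<partial>M) < e"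
proof -
  obtain N where N: "\<And>m n. N \<le> m \<Longrightarrow> N \<le> n \<Longrightarrow> (\<integral>x. (u m x - u n x)^2 \<partial>M) < e^2"
    using Cauchy[of "e^2"] \<open>e > 0\<close> by auto
  have "(\<integral>x. \<bar>u m x - u n x\<bar> \<partial>M) < e" if "N \<le> m" "N \<le> n" for m n
    using integral_abs_le_sqrt_integral_square[OF sq_int_diff[OF u u], of m n]
      real_sqrt_less_mono[OF N[OF that]] \<open>e > 0\<close> by simp
  then show ?thesis by blast
qed

lemma L1_tendsto_of_Cauchy_subseq:
  fixes u :: "nat \<Rightarrow> 'a \<Rightarrow> real"
  assumes g: "integrable M g" and u: "\<And>n. integrable M (u n)"
    and Cauchy: "\<And>e. e > 0 \<Longrightarrow> \<exists>N. \<forall>m\<ge>N. \<forall>n\<ge>N. (\<integral>x. \<bar>u m x - u n x\<bar> \<partial>M) < e"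
    and r: "strict_mono r" and sub: "(\<lambda>k. \<integral>x. \<bar>g x - u (r k) x\<bar> \<partial>M) \<longlonglongrightarrow> 0"
  shows "(\<lambda>n. \<integral>x. \<bar>g x - u n x\<bar> \<partial>M) \<longlonglongrightarrow> 0"
proof (rule LIMSEQ_I)
  fix e :: real assume "e > 0"
  obtain N where N: "\<And>m n. N \<le> m \<Longrightarrow> N \<le> n \<Longrightarrow> (\<integral>x. \<bar>u m x - u n x\<bar> \<partial>M) < e / 2"
    using Cauchy[of "e/2"] \<open>e > 0\<close> by auto
  obtain k where k: "N \<le> r k" "(\<integral>x. \<bar>g x - u (r k) x\<bar> \<partial>M) < e / 2"
  proof -
    obtain K where "\<And>k. K \<le> k \<Longrightarrow> (\<integral>x. \<bar>g x - u (r k) x\<bar> \<partial>M) < e / 2"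
      using LIMSEQ_D[OF sub, of "e/2"] \<open>e > 0\<close> by auto
    then show ?thesis
      using that[of "max K N"] seq_suble[OF r, of "max K N"] by simp
  qed
  show "\<exists>no. \<forall>n\<ge>no. norm ((\<integral>x. \<bar>g x - u n x\<bar> \<partial>M) - 0) < e"
  proof (intro exI allI impI)
    fix n assume "N \<le> n"
    have "(\<integral>x. \<bar>g x - u n x\<bar> \<partial>M) \<le> (\<integral>x. \<bar>g x - u (r k) x\<bar> + \<bar>u (r k) x - u n x\<bar> \<partial>M)"
      using g u by (intro integral_mono) auto
    also have "\<dots> < e"
      using k N[OF k(1) \<open>N \<le> n\<close>] g u by simp
    finally show "norm ((\<integral>x. \<bar>g x - u n x\<bar> \<partial>M) - 0) < e" by simp
  qed
qed

text \<open>Along a subsequence with \<open>\<integral>\<bar>u (r (k+1)) - u (r k)\<bar> < 2\<^sup>-\<^sup>k\<close>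
  the increments form an \<open>L\<^sup>1\<close>-summable series.\<close>

lemma L1_Cauchy_convergent:
  fixes u :: "nat \<Rightarrow> 'a \<Rightarrow> real"
  assumes u: "\<And>n. integrable M (u n)"
    and Cauchy: "\<And>e. e > 0 \<Longrightarrow> \<exists>N. \<forall>m\<ge>N. \<forall>n\<ge>N. (\<integral>x. \<bar>u m x - u n x\<bar> \<partial>M) < e"
  obtains g where "integrable M g" "(\<lambda>n. \<integral>x. \<bar>g x - u n x\<bar> \<partial>M) \<longlonglongrightarrow> 0"
proof -
  have "\<forall>k::nat. \<exists>N. \<forall>m\<ge>N. \<forall>n\<ge>N. (\<integral>x. \<bar>u m x - u n x\<bar> \<partial>M) < (1/2)^k"
    using Cauchy by simp
  then obtain N where N: "\<And>k m n. N k \<le> m \<Longrightarrow> N k \<le> n \<Longrightarrow> (\<integral>x. \<bar>u m x - u n x\<bar> \<partial>M) < (1/2)^k"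
    by metis
  define r where "r k = (\<Sum>i\<le>k. N i) + k" for k
  have r_mono: "strict_mono r" unfolding strict_mono_Suc_iff r_def by simp
  have N_le_r: "N k \<le> r k" for k
    unfolding r_def using member_le_sum[of k "{..k}" N] by simp
  define d where "d k x = u (r (Suc k)) x - u (r k) x" for k x
  have d_int: "integrable M (d k)" for k
    unfolding d_def using u by simp
  have "(\<integral>x. \<bar>d k x\<bar> \<partial>M) \<le> (1/2)^k" for k
    unfolding d_def using N[OF order.trans[OF N_le_r strict_mono_leD[OF r_mono]] N_le_r, of k "Suc k"]
    by simp
  then have d_sum: "summable (\<lambda>k. \<integral>x. \<bar>d k x\<bar> \<partial>M)"
    by (intro summable_comparison_test[OF _ summable_geometric[of "1/2"]]) auto
  define g where "g x = u (r 0) x + (\<Sum>k. d k x)" for x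
  have g_int: "integrable M g"
    unfolding g_def using suminf_L1_convergent(1)[OF d_int d_sum] u by simp
  have "(\<Sum>k<n. d k x) = u (r n) x - u (r 0) x" for n x
    unfolding d_def by (rule sum_lessThan_telescope)
  then have "g x - u (r n) x = (\<Sum>k. d k x) - (\<Sum>k<n. d k x)" for n x
    unfolding g_def by simp
  then have sub: "(\<lambda>k. \<integral>x. \<bar>g x - u (r k) x\<bar> \<partial>M) \<longlonglongrightarrow> 0"
    using suminf_L1_convergent(2)[OF d_int d_sum] by simp
  have "(\<lambda>n. \<integral>x. \<bar>g x - u n x\<bar> \<partial>M) \<longlonglongrightarrow> 0"
    by (rule L1_tendsto_of_Cauchy_subseq[OF g_int u Cauchy r_mono sub])
  with g_int that show ?thesis by blast
qed

lemma L2_Cauchy_L1_convergent: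
  fixes u :: "nat \<Rightarrow> 'a \<Rightarrow> real"
  assumes u: "\<And>n. sq_int M (u n)"
    and Cauchy: "\<And>e. e > 0 \<Longrightarrow> \<exists>N. \<forall>m\<ge>N. \<forall>n\<ge>N. (\<integral>x. (u m x - u n x)^2 \<partial>M) < e"
  obtains g where "integrable M g" "(\<lambda>n. \<integral>x. \<bar>g x - u n x\<bar> \<partial>M) \<longlonglongrightarrow> 0"
  using L1_Cauchy_convergent[OF sq_int_integrable[OF u] L1_Cauchy_of_L2_Cauchy[OF u Cauchy]] by blast

lemma integral_abs_le_of_L1_limit:
  fixes g :: "'a \<Rightarrow> real"
  assumes g: "integrable M g" and u: "\<And>n. integrable M (u n)"
    and lim: "(\<lambda>n. \<integral>x. \<bar>g x - u n x\<bar> \<partial>M) \<longlonglongrightarrow> 0" and bound: "\<And>n. (\<integral>x. \<bar>u n x\<bar> \<partial>M) \<le> C"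
  shows "(\<integral>x. \<bar>g x\<bar> \<partial>M) \<le> C"
proof (rule LIMSEQ_le_const[where X="\<lambda>n. (\<integral>x. \<bar>g x - u n x\<bar> \<partial>M) + C"])
  show "(\<lambda>n. (\<integral>x. \<bar>g x - u n x\<bar> \<partial>M) + C) \<longlonglongrightarrow> C"
    using tendsto_add[OF lim tendsto_const] by simp
  have "(\<integral>x. \<bar>g x\<bar> \<partial>M) \<le> (\<integral>x. \<bar>g x - u n x\<bar> + \<bar>u n x\<bar> \<partial>M)" for n
    using g u by (intro integral_mono) auto
  also have "\<dots> n = (\<integral>x. \<bar>g x - u n x\<bar> \<partial>M) + (\<integral>x. \<bar>u n x\<bar> \<partial>M)" for n
    using g u by simp
  finally show "\<exists>N. \<forall>n\<ge>N. (\<integral>x. \<bar>g x\<bar> \<partial>M) \<le> (\<integral>x. \<bar>g x - u n x\<bar> \<partial>M) + C"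
    using bound by (meson add_left_mono order.trans)
qed

end

section \<open>Orthonormal systems\<close>

locale orthonormal_system = prob_space M for M :: "'a measure" +
  fixes \<phi> :: "nat \<Rightarrow> 'a \<Rightarrow> real"
  assumes sq_int_basis: "sq_int M (\<phi> j)"
    and orthonormal: "(\<integral>x. \<phi> i x * \<phi> j x \<partial>M) = (if i = j then 1 else 0)"
begin

lemma integrable_basis: "integrable M (\<phi> j)"
  by (rule sq_int_integrable[OF sq_int_basis])

lemma measurable_basis[measurable]: "\<phi> j \<in> borel_measurable M"
  using sq_int_basis unfolding sq_int_def by simp

lemma sq_int_combination: "sq_int M (\<lambda>x. \<Sum>j\<in>A. c j * \<phi> j x)"
  by (intro sq_int_sum sq_int_cmult sq_int_basis)

lemma integral_mult_combination:
  assumes "sq_int M h" "finite A"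
  shows "(\<integral>x. h x * (\<Sum>j\<in>A. c j * \<phi> j x) \<partial>M) = (\<Sum>j\<in>A. c j * (\<integral>x. h x * \<phi> j x \<partial>M))"
proof -
  have "(\<integral>x. h x * (\<Sum>j\<in>A. c j * \<phi> j x) \<partial>M) = (\<integral>x. (\<Sum>j\<in>A. c j * (h x * \<phi> j x)) \<partial>M)"
    by (simp add: sum_distrib_left mult_ac)
  also have "\<dots> = (\<Sum>j\<in>A. c j * (\<integral>x. h x * \<phi> j x \<partial>M))"
    using sq_int_integrable_mult[OF assms(1) sq_int_basis] by simp
  finally show ?thesis .
qed

lemma integral_combination_mult:
  assumes "finite A"
  shows "(\<integral>x. (\<Sum>j\<in>A. c j * \<phi> j x) * (\<Sum>j\<in>A. d j * \<phi> j x) \<partial>M) = (\<Sum>j\<in>A. c j * d j)"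
proof -
  have "(\<integral>x. (\<Sum>j\<in>A. c j * \<phi> j x) * (\<Sum>j\<in>A. d j * \<phi> j x) \<partial>M)
      = (\<integral>x. (\<Sum>i\<in>A. \<Sum>j\<in>A. c i * d j * (\<phi> i x * \<phi> j x)) \<partial>M)"
    by (simp add: sum_product mult_ac)
  also have "\<dots> = (\<Sum>i\<in>A. \<Sum>j\<in>A. c i * d j * (if i = j then 1 else 0))"
    using sq_int_integrable_mult[OF sq_int_basis sq_int_basis] by (simp add: orthonormal)
  also have "\<dots> = (\<Sum>j\<in>A. c j * d j)"
    using assms by (simp add: if_distrib[of "(*) _"] cong: if_cong)
  finally show ?thesis .
qed

lemma integral_combination_square:
  "finite A \<Longrightarrow> (\<integral>x. (\<Sum>j\<in>A. c j * \<phi> j x)^2 \<partial>M) = (\<Sum>j\<in>A. (c j)^2)"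
  using integral_combination_mult[of A c c] by (simp add: power2_eq_square)

lemma bessel_inequality:
  assumes h: "sq_int M h"
  shows "(\<Sum>j<n. (\<integral>x. h x * \<phi> j x \<partial>M)^2) \<le> (\<integral>x. (h x)^2 \<partial>M)"
proof -
  define a where "a j = (\<integral>x. h x * \<phi> j x \<partial>M)" for j
  define S where "S x = (\<Sum>j<n. a j * \<phi> j x)" for x
  have hS: "integrable M (\<lambda>x. h x * S x)" "integrable M (\<lambda>x. (S x)^2)"
    unfolding S_def using sq_int_integrable_mult[OF h sq_int_combination]
      sq_int_integrable_square[OF sq_int_combination] by auto
  have "0 \<le> (\<integral>x. (h x - S x)^2 \<partial>M)" by simp
  also have "\<dots> = (\<integral>x. (h x)^2 - 2 * (h x * S x) + (S x)^2 \<partial>M)"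
    by (simp add: power2_diff mult.assoc algebra_simps)
  also have "\<dots> = (\<integral>x. (h x)^2 \<partial>M) - 2 * (\<integral>x. h x * S x \<partial>M) + (\<integral>x. (S x)^2 \<partial>M)"
    using sq_int_integrable_square[OF h] hS by simp
  also have "\<dots> = (\<integral>x. (h x)^2 \<partial>M) - (\<Sum>j<n. (a j)^2)"
    unfolding S_def integral_combination_square[OF finite_lessThan]
    by (simp add: integral_mult_combination[OF h] a_def power2_eq_square)
  finally show ?thesis unfolding a_def by simp
qed

lemma integral_combination_square_le:
  assumes h: "sq_int M h" and c: "\<And>j. \<bar>c j\<bar> \<le> B * \<bar>\<integral>x. h x * \<phi> j x \<partial>M\<bar>" and "0 \<le> B"
  shows "(\<integral>x. (\<Sum>j<n. c j * \<phi> j x)^2 \<partial>M) \<le> B^2 * (\<integral>x. (h x)^2 \<partial>M)"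
proof -
  have "(c j)^2 \<le> B^2 * (\<integral>x. h x * \<phi> j x \<partial>M)^2" for j
    using power_mono[OF c[of j], of 2] by (simp add: power_mult_distrib)
  then have "(\<Sum>j<n. (c j)^2) \<le> B^2 * (\<Sum>j<n. (\<integral>x. h x * \<phi> j x \<partial>M)^2)"
    by (simp add: sum_distrib_left sum_mono)
  also have "\<dots> \<le> B^2 * (\<integral>x. (h x)^2 \<partial>M)"
    by (intro mult_left_mono bessel_inequality h) simp
  finally show ?thesis by (simp add: integral_combination_square)
qed

lemma integral_abs_combination_le:
  assumes h: "sq_int M h" and c: "\<And>j. \<bar>c j\<bar> \<le> B * \<bar>\<integral>x. h x * \<phi> j x \<partial>M\<bar>" and B: "0 \<le> B"
  shows "(\<integral>x. \<bar>\<Sum>j<n. c j * \<phi> j x\<bar> \<partial>M) \<le> B * sqrt (\<integral>x. (h x)^2 \<partial>M)"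
proof -
  have "(\<integral>x. \<bar>\<Sum>j<n. c j * \<phi> j x\<bar> \<partial>M) \<le> sqrt (\<integral>x. (\<Sum>j<n. c j * \<phi> j x)^2 \<partial>M)"
    by (rule integral_abs_le_sqrt_integral_square[OF sq_int_combination])
  also have "\<dots> \<le> sqrt (B^2 * (\<integral>x. (h x)^2 \<partial>M))"
    using integral_combination_square_le[OF assms] by simp
  finally show ?thesis using B by (simp add: real_sqrt_mult)
qed

lemma summable_square_of_dominated:
  assumes h: "sq_int M h" and c: "\<And>j. \<bar>c j\<bar> \<le> B * \<bar>\<integral>x. h x * \<phi> j x \<partial>M\<bar>" and "0 \<le> B"
  shows "summable (\<lambda>j. (c j)^2)"
proof (rule summableI_nonneg_bounded)
  show "(\<Sum>j<n. (c j)^2) \<le> B^2 * (\<integral>x. (h x)^2 \<partial>M)" for n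
    using integral_combination_square_le[OF assms, of n] by (simp add: integral_combination_square)
qed simp

lemma partial_sums_L2_Cauchy:
  assumes "summable (\<lambda>j. (c j)^2)" "e > 0"
  shows "\<exists>N. \<forall>m\<ge>N. \<forall>n\<ge>N.
           (\<integral>x. ((\<Sum>j<m. c j * \<phi> j x) - (\<Sum>j<n. c j * \<phi> j x))^2 \<partial>M) < e"
proof -
  obtain N where N: "\<And>m n. N \<le> m \<Longrightarrow> \<bar>\<Sum>j\<in>{m..<n}. (c j)^2\<bar> < e"
    using assms unfolding summable_Cauchy by (metis real_norm_def)
  have less: "(\<integral>x. ((\<Sum>j<m. c j * \<phi> j x) - (\<Sum>j<n. c j * \<phi> j x))^2 \<partial>M) < e"
    if "N \<le> n" "n \<le> m" for m n
  proof -
    have "(\<Sum>j<m. c j * \<phi> j x) - (\<Sum>j<n. c j * \<phi> j x) = (\<Sum>j\<in>{n..<m}. c j * \<phi> j x)" for x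
      using sum_diff_nat_ivl[of 0 n m] that by (simp add: atLeast0LessThan)
    then show ?thesis
      using N[of n m] that by (simp add: integral_combination_square)
  qed
  show ?thesis
  proof (intro exI allI impI)
    fix m n assume "N \<le> m" "N \<le> n"
    then show "(\<integral>x. ((\<Sum>j<m. c j * \<phi> j x) - (\<Sum>j<n. c j * \<phi> j x))^2 \<partial>M) < e"
      using less[of n m] less[of m n] by (cases "n \<le> m") (simp_all add: power2_commute)
  qed
qed

end

section \<open>Continuous kernels on a compact space\<close>

lemma compact_Borel_partition:
  assumes "compact (UNIV :: 'a::metric_space set)" "r > 0"
  obtains P :: "nat \<Rightarrow> 'a::metric_space set" and n :: nat and c :: "nat \<Rightarrow> 'a"
  where "\<And>i. P i \<in> sets borel" "\<And>x. (\<Sum>i<n. indicator (P i) x) = (1::real)"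
    "\<And>i x. i < n \<Longrightarrow> x \<in> P i \<Longrightarrow> dist x (c i) < r"
proof -
  obtain C where C: "finite C" "(UNIV :: 'a set) \<subseteq> (\<Union>c\<in>C. ball c r)"
  proof (rule compactE_image[OF assms(1), of UNIV "\<lambda>c. ball c r"])
    show "(UNIV :: 'a set) \<subseteq> (\<Union>c\<in>UNIV. ball c r)" using assms(2) by auto
  qed auto
  obtain l where l_C: "set l = C" using finite_list[OF C(1)] by blast
  have l: "\<exists>i<length l. x \<in> ball (l ! i) r" for x
  proof -
    obtain c where "c \<in> set l" "x \<in> ball c r" using C(2) l_C by blast
    then show ?thesis by (metis in_set_conv_nth)
  qed
  define n where "n = length l"
  define P where "P i = ball (l!i) r - (\<Union>k<i. ball (l!k) r)" for i
  have "(\<Sum>i<n. indicator (P i) x) = (1::real)" for x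
  proof -
    define i0 where "i0 = (LEAST i. i < n \<and> x \<in> ball (l!i) r)"
    have i0: "i0 < n" "x \<in> ball (l!i0) r"
      using LeastI_ex[OF l[of x, folded n_def]] unfolding i0_def by auto
    have before_i0: "x \<notin> ball (l!k) r" if "k < i0" for k
      using not_less_Least[of k "\<lambda>i. i < n \<and> x \<in> ball (l!i) r"] i0(1) that
      unfolding i0_def by auto
    have "x \<in> P i \<longleftrightarrow> i = i0" if "i < n" for i
    proof
      assume xP: "x \<in> P i"
      then have "i0 \<le> i" unfolding i0_def P_def using that by (intro Least_le) auto
      moreover have "\<not> i0 < i" using xP i0(2) unfolding P_def by auto
      ultimately show "i = i0" by simp
    qed (use i0 before_i0 in \<open>auto simp: P_def\<close>)
    then have "(\<Sum>i<n. indicator (P i) x) = (\<Sum>i<n. if i = i0 then 1 else (0::real))"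
      by (intro sum.cong) (auto simp: indicator_def)
    then show ?thesis using i0(1) by simp
  qed
  moreover have "P i \<in> sets borel" for i
    unfolding P_def by (intro sets.Diff borel_open open_UN) auto
  moreover have "dist x (l!i) < r" if "x \<in> P i" for i x
    using that unfolding P_def by (auto simp: dist_commute)
  ultimately show ?thesis using that by blast
qed

lemma pos_def_kernel_quadratic_form_nonneg:
  fixes n :: nat
  assumes "pos_def_kernel K"
  shows "0 \<le> (\<Sum>i<n. \<Sum>k<n. w i * w k * K (c i) (c k))"
proof -
  have "\<forall>(xs :: 'a list) (a :: real list). length a = length xs \<longrightarrow>
      0 \<le> (\<Sum>i<length xs. \<Sum>j<length xs. a!i * a!j * K (xs!i) (xs!j))"
    using assms unfolding pos_def_kernel_def by blast
  note this[rule_format, of "map w [0..<n]" "map c [0..<n]"]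
  then have "0 \<le> (\<Sum>i<length (map c [0..<n]). \<Sum>j<length (map c [0..<n]).
      map w [0..<n] ! i * map w [0..<n] ! j * K (map c [0..<n] ! i) (map c [0..<n] ! j))"
    by simp
  also have "\<dots> = (\<Sum>i<n. \<Sum>k<n. w i * w k * K (c i) (c k))"
    by (intro sum.cong) auto
  finally show ?thesis .
qed

lemma tot_var_bounds:
  assumes "finite_borel \<mu>1" "finite_borel \<mu>2"
  shows "0 \<le> tot_var \<mu>1 \<mu>2" "tot_var \<mu>1 \<mu>2 \<le> measure \<mu>1 UNIV + measure \<mu>2 UNIV"
proof -
  interpret m1: finite_measure \<mu>1 using assms(1) unfolding finite_borel_def by auto
  interpret m2: finite_measure \<mu>2 using assms(2) unfolding finite_borel_def by auto
  have sets: "sets \<mu>1 = sets borel" "sets \<mu>2 = sets borel"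
    using assms unfolding finite_borel_def by auto
  define S where "S = {(\<Sum>i<n. \<bar>measure \<mu>1 (A i) - measure \<mu>2 (A i)\<bar>) | (n::nat) A.
      disjoint_family_on A {..<n} \<and> (\<forall>i<n. A i \<in> sets \<mu>1) \<and> (\<Union>i<n. A i) = UNIV}"
  have ub: "v \<le> measure \<mu>1 UNIV + measure \<mu>2 UNIV" if "v \<in> S" for v
  proof -
    obtain n :: nat and A where v: "v = (\<Sum>i<n. \<bar>measure \<mu>1 (A i) - measure \<mu>2 (A i)\<bar>)"
      and A: "disjoint_family_on A {..<n}" "\<forall>i<n. A i \<in> sets \<mu>1" "(\<Union>i<n. A i) = UNIV"
      using \<open>v \<in> S\<close> unfolding S_def by blast
    have "v \<le> (\<Sum>i<n. measure \<mu>1 (A i)) + (\<Sum>i<n. measure \<mu>2 (A i))"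
      unfolding v sum.distrib[symmetric] by (intro sum_mono) (simp add: abs_le_iff)
    also have "\<dots> = measure \<mu>1 (\<Union>i<n. A i) + measure \<mu>2 (\<Union>i<n. A i)"
      using A sets by (intro arg_cong2[where f="(+)"] m1.finite_measure_finite_Union[symmetric]
          m2.finite_measure_finite_Union[symmetric]) auto
    finally show ?thesis using A(3) by simp
  qed
  have "\<bar>measure \<mu>1 UNIV - measure \<mu>2 UNIV\<bar> \<in> S"
    unfolding S_def using sets
    by (intro CollectI exI[of _ "1::nat"] exI[of _ "\<lambda>_. UNIV"]) (auto simp: disjoint_family_on_def)
  moreover have "bdd_above S" using ub by (intro bdd_aboveI) blast
  ultimately show "0 \<le> tot_var \<mu>1 \<mu>2" "tot_var \<mu>1 \<mu>2 \<le> measure \<mu>1 UNIV + measure \<mu>2 UNIV"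
    unfolding tot_var_def S_def[symmetric] using ub
    by (auto intro: order.trans[OF abs_ge_zero cSup_upper] cSup_least)
qed

lemma (in prob_space) integral_step_kernel:
  fixes a :: "nat \<Rightarrow> nat \<Rightarrow> real"
  assumes f: "integrable M f" and P: "\<And>i. P i \<in> sets M"
  defines "w i \<equiv> \<integral>t. indicator (P i) t * f t \<partial>M"
  shows "(\<integral>t. f t * (\<Sum>i<n. \<Sum>k<n. indicator (P i) t * indicator (P k) x * a i k) \<partial>M)
      = (\<Sum>i<n. \<Sum>k<n. indicator (P k) x * a i k * w i)"
    and "(\<integral>x. f x * (\<Sum>i<n. \<Sum>k<n. indicator (P k) x * a i k * w i) \<partial>M)
      = (\<Sum>i<n. \<Sum>k<n. w i * w k * a i k)"
proof -
  have int: "integrable M (\<lambda>t. indicator (P i) t * f t)" for i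
    using integrable_mult_indicator[OF P f] by simp
  have "(\<integral>t. f t * (\<Sum>i<n. \<Sum>k<n. indicator (P i) t * indicator (P k) x * a i k) \<partial>M)
      = (\<integral>t. (\<Sum>i<n. \<Sum>k<n. (indicator (P k) x * a i k) * (indicator (P i) t * f t)) \<partial>M)"
    by (simp add: sum_distrib_left mult_ac)
  also have "\<dots> = (\<Sum>i<n. \<Sum>k<n. indicator (P k) x * a i k * w i)"
    using int by (simp add: w_def)
  finally show "(\<integral>t. f t * (\<Sum>i<n. \<Sum>k<n. indicator (P i) t * indicator (P k) x * a i k) \<partial>M)
      = (\<Sum>i<n. \<Sum>k<n. indicator (P k) x * a i k * w i)" .
  have "(\<integral>x. f x * (\<Sum>i<n. \<Sum>k<n. indicator (P k) x * a i k * w i) \<partial>M)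
      = (\<integral>x. (\<Sum>i<n. \<Sum>k<n. (a i k * w i) * (indicator (P k) x * f x)) \<partial>M)"
    by (simp add: sum_distrib_left mult_ac)
  also have "\<dots> = (\<Sum>i<n. \<Sum>k<n. (a i k * w i) * w k)"
    using int unfolding w_def by simp
  finally show "(\<integral>x. f x * (\<Sum>i<n. \<Sum>k<n. indicator (P k) x * a i k * w i) \<partial>M)
      = (\<Sum>i<n. \<Sum>k<n. w i * w k * a i k)" by (simp add: mult_ac)
qed

locale compact_kernel = prob_space M for M :: "'a::metric_space measure" +
  fixes K :: "'a \<Rightarrow> 'a \<Rightarrow> real"
  assumes sets_eq_borel: "sets M = sets borel"
    and continuous_kernel: "continuous_on UNIV (\<lambda>(x, y). K x y)"
    and compact_UNIV: "compact (UNIV :: 'a set)"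
begin

lemma space_eq_UNIV [simp]: "space M = UNIV"
  using sets_eq_imp_space_eq[OF sets_eq_borel] by simp

lemma measurable_iff_borel: "f \<in> borel_measurable M \<longleftrightarrow> f \<in> borel_measurable borel"
  using measurable_cong_sets[OF sets_eq_borel refl] by blast

lemma uniformly_continuous_kernel: "uniformly_continuous_on UNIV (\<lambda>(x, y). K x y)"
  using compact_uniformly_continuous[OF continuous_kernel] compact_Times[OF compact_UNIV compact_UNIV]
  by simp

lemma kernel_bounded: "\<exists>B>0. \<forall>t x. \<bar>K t x\<bar> \<le> B"
proof -
  have "bounded ((\<lambda>(x, y). K x y) ` UNIV)"
    using compact_continuous_image[OF continuous_kernel] compact_Times[OF compact_UNIV compact_UNIV]
    by (simp add: compact_imp_bounded)
  then obtain B where "B > 0" "\<And>z. z \<in> (\<lambda>(x, y). K x y) ` UNIV \<Longrightarrow> norm z \<le> B"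
    by (meson bounded_pos)
  then show ?thesis by force
qed

definition kernel_bound :: real where
  "kernel_bound = (SOME B. 0 < B \<and> (\<forall>t x. \<bar>K t x\<bar> \<le> B))"

lemma kernel_bound: "0 < kernel_bound" "\<bar>K t x\<bar> \<le> kernel_bound"
  using someI_ex[OF kernel_bounded] unfolding kernel_bound_def by auto

lemma measurable_kernel_left [measurable]: "(\<lambda>t. K t x) \<in> borel_measurable M"
proof -
  have "continuous_on UNIV ((\<lambda>(x, y). K x y) \<circ> (\<lambda>t. (t, x)))"
    by (intro continuous_on_compose continuous_intros continuous_on_subset[OF continuous_kernel]) auto
  then show ?thesis
    unfolding measurable_iff_borel by (intro borel_measurable_continuous_onI) (simp add: o_def)
qed

lemma int_op_eq: "int_op K M g x = (\<integral>t. g t * K t x \<partial>M)"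
  unfolding int_op_def by (simp add: mult.commute)

lemma integrable_kernel_mult: "integrable M g \<Longrightarrow> integrable M (\<lambda>t. g t * K t x)"
  by (rule integrable_mult_bounded[OF _ measurable_kernel_left kernel_bound(2)])

lemma int_op_diff:
  "integrable M g \<Longrightarrow> integrable M u \<Longrightarrow>
    int_op K M g x - int_op K M u x = int_op K M (\<lambda>t. g t - u t) x"
  unfolding int_op_eq using integrable_kernel_mult[of g] integrable_kernel_mult[of u]
  by (simp add: left_diff_distrib)

lemma int_op_sum:
  "(\<And>j. integrable M (f j)) \<Longrightarrow>
    int_op K M (\<lambda>t. \<Sum>j<n. c j * f j t) x = (\<Sum>j<n. c j * int_op K M (f j) x)"
  unfolding int_op_def using integrable_kernel_mult
  by (simp add: sum_distrib_left mult.left_commute mult.commute[of "K _ x"])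

lemma abs_int_op_le:
  assumes "integrable M g"
  shows "\<bar>int_op K M g x\<bar> \<le> kernel_bound * (\<integral>t. \<bar>g t\<bar> \<partial>M)"
  using abs_integral_mult_diff_le[OF assms measurable_kernel_left kernel_bound(2), of "\<lambda>_. 0" 0]
    kernel_bound(2) unfolding int_op_eq by simp

lemma abs_int_op_diff_le:
  assumes "integrable M g" "integrable M u"
  shows "\<bar>int_op K M g x - int_op K M u x\<bar> \<le> kernel_bound * (\<integral>t. \<bar>g t - u t\<bar> \<partial>M)"
  unfolding int_op_diff[OF assms] using assms by (intro abs_int_op_le) simp

lemma continuous_on_int_op:
  assumes g: "integrable M g"
  shows "continuous_on UNIV (int_op K M g)"
  unfolding continuous_on_iff
proof (intro ballI allI impI)
  fix x :: 'a and e :: real assume "e > 0"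
  define m where "m = (\<integral>t. \<bar>g t\<bar> \<partial>M)"
  have "0 \<le> m" unfolding m_def by simp
  then have "e / (m + 1) > 0" using \<open>e > 0\<close> by simp
  then obtain d where "d > 0"
    and d: "\<And>z z'. dist z' z < d \<Longrightarrow> dist ((\<lambda>(x, y). K x y) z') ((\<lambda>(x, y). K x y) z) < e / (m + 1)"
    using uniformly_continuous_kernel unfolding uniformly_continuous_on_def by blast
  have "dist (int_op K M g y) (int_op K M g x) < e" if "dist y x < d" for y
  proof -
    have "\<bar>K t y - K t x\<bar> \<le> e / (m + 1)" for t
      using d[of "(t, x)" "(t, y)"] that by (simp add: dist_Pair_Pair dist_real_def dist_commute abs_minus_commute)
    then have "\<bar>(\<integral>t. g t * K t y \<partial>M) - (\<integral>t. g t * K t x \<partial>M)\<bar> \<le> e / (m + 1) * m"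
      unfolding m_def
      by (intro abs_integral_mult_diff_le[where C=kernel_bound and D=kernel_bound] g
          kernel_bound(2) measurable_kernel_left)
    then have "dist (int_op K M g y) (int_op K M g x) \<le> e / (m + 1) * m"
      unfolding int_op_eq dist_real_def .
    also have "\<dots> < e"
      using \<open>e > 0\<close> \<open>0 \<le> m\<close> by (simp add: field_simps)
    finally show ?thesis .
  qed
  then show "\<exists>d>0. \<forall>y\<in>UNIV. dist y x < d \<longrightarrow> dist (int_op K M g y) (int_op K M g x) < e"
    using \<open>d > 0\<close> by blast
qed

lemma measurable_int_op [measurable]: "integrable M g \<Longrightarrow> int_op K M g \<in> borel_measurable M"
  unfolding measurable_iff_borel by (rule borel_measurable_continuous_onI[OF continuous_on_int_op])

lemma sq_int_int_op: "integrable M g \<Longrightarrow> sq_int M (int_op K M g)"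
  by (rule sq_int_bounded[OF measurable_int_op abs_int_op_le])

lemma kernel_step_approximation:
  assumes "e > 0"
  obtains P and n :: nat and c where "\<And>i. P i \<in> sets M" "\<And>x. (\<Sum>i<n. indicator (P i) x) = (1::real)"
    "\<And>t x. \<bar>K t x - (\<Sum>i<n. \<Sum>k<n. indicator (P i) t * indicator (P k) x * K (c i) (c k))\<bar> \<le> e"
proof -
  obtain d where "d > 0"
    and d: "\<And>z z'. dist z' z < d \<Longrightarrow> dist ((\<lambda>(x, y). K x y) z') ((\<lambda>(x, y). K x y) z) < e"
    using uniformly_continuous_kernel assms unfolding uniformly_continuous_on_def by blast
  obtain P :: "nat \<Rightarrow> 'a set" and n :: nat and c where P: "\<And>i. P i \<in> sets borel" and one: "\<And>x. (\<Sum>i<n. indicator (P i) x) = (1::real)"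
    and small: "\<And>i x. i < n \<Longrightarrow> x \<in> P i \<Longrightarrow> dist x (c i) < d / 2"
    by (rule compact_Borel_partition[OF compact_UNIV half_gt_zero[OF \<open>d > 0\<close>]]) blast
  have sum_one: "(\<Sum>i<n. \<Sum>k<n. indicator (P i) t * indicator (P k) x * a) = a" for t x and a :: real
  proof -
    have "(\<Sum>i<n. \<Sum>k<n. indicator (P i) t * indicator (P k) x * a)
        = (\<Sum>i<n. indicator (P i) t * ((\<Sum>k<n. indicator (P k) x) * a))"
      by (simp only: sum_distrib_left sum_distrib_right mult.assoc)
    also have "\<dots> = a" by (simp add: one flip: sum_distrib_right)
    finally show ?thesis .
  qed
  have "\<bar>K t x - (\<Sum>i<n. \<Sum>k<n. indicator (P i) t * indicator (P k) x * K (c i) (c k))\<bar> \<le> e" for t x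
  proof -
    have "\<bar>K t x - (\<Sum>i<n. \<Sum>k<n. indicator (P i) t * indicator (P k) x * K (c i) (c k))\<bar>
        = \<bar>\<Sum>i<n. \<Sum>k<n. indicator (P i) t * indicator (P k) x * (K t x - K (c i) (c k))\<bar>"
      using sum_one[of t x "K t x"]
      by (simp add: right_diff_distrib sum_subtractf)
    also have "\<dots> \<le> (\<Sum>i<n. \<Sum>k<n. \<bar>indicator (P i) t * indicator (P k) x * (K t x - K (c i) (c k))\<bar>)"
      by (rule order_trans[OF sum_abs sum_mono]) (rule sum_abs)
    also have "\<dots> \<le> (\<Sum>i<n. \<Sum>k<n. indicator (P i) t * indicator (P k) x * e)"
    proof (intro sum_mono)
      fix i k assume "i \<in> {..<n}" "k \<in> {..<n}"
      moreover have "dist (t, x) (c i, c k) < d" if "t \<in> P i" "x \<in> P k" "i < n" "k < n"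
        using small[OF that(3,1)] small[OF that(4,2)] dist_Pair_Pair[of t x "c i" "c k"]
          sqrt_sum_squares_le_sum[of "dist t (c i)" "dist x (c k)"] by simp
      ultimately show "\<bar>indicator (P i) t * indicator (P k) x * (K t x - K (c i) (c k))\<bar>
          \<le> indicator (P i) t * indicator (P k) x * e"
        using d[of "(c i, c k)" "(t, x)"]
        by (auto simp: indicator_def dist_real_def abs_minus_commute dist_commute less_imp_le)
    qed
    also have "\<dots> = e" by (rule sum_one)
    finally show ?thesis .
  qed
  with that P one show ?thesis unfolding sets_eq_borel by blast
qed

lemma integral_mult_int_op_nonneg:
  assumes pd: "pos_def_kernel K" and f: "integrable M f"
  shows "0 \<le> (\<integral>x. f x * int_op K M f x \<partial>M)"
proof (rule field_le_epsilon)
  fix e :: real assume "e > 0"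
  define m where "m = (\<integral>x. \<bar>f x\<bar> \<partial>M)"
  have "0 \<le> m" unfolding m_def by simp
  define e' where "e' = e / (m * m + 1)"
  have "e' > 0" unfolding e'_def using \<open>e > 0\<close> by (simp add: add_nonneg_pos)
  obtain P and n :: nat and c where P: "\<And>i. P i \<in> sets M" and one: "\<And>x. (\<Sum>i<n. indicator (P i) x) = (1::real)"
    and approx: "\<And>t x. \<bar>K t x - (\<Sum>i<n. \<Sum>k<n. indicator (P i) t * indicator (P k) x * K (c i) (c k))\<bar> \<le> e'"
    by (rule kernel_step_approximation[OF \<open>e' > 0\<close>]) blast
  define Ks where "Ks t x = (\<Sum>i<n. \<Sum>k<n. indicator (P i) t * indicator (P k) x * K (c i) (c k))" for t x
  define w where "w i = (\<integral>t. indicator (P i) t * f t \<partial>M)" for i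
  define G where "G x = (\<Sum>i<n. \<Sum>k<n. indicator (P k) x * K (c i) (c k) * w i)" for x
  have [measurable]: "P i \<in> sets M" for i by (rule P)
  have [measurable]: "(\<lambda>t. Ks t x) \<in> borel_measurable M" "G \<in> borel_measurable M" for x
    unfolding Ks_def G_def by measurable
  have Ks_bound: "\<bar>Ks t x\<bar> \<le> kernel_bound + e'" for t x
    using approx[of t x] kernel_bound(2)[of t x] unfolding Ks_def by linarith
  have G_eq: "G x = (\<integral>t. f t * Ks t x \<partial>M)" for x
    unfolding G_def Ks_def w_def using integral_step_kernel(1)[of f P, OF f P] by simp
  have approx_G: "\<bar>int_op K M f x - G x\<bar> \<le> e' * m" for x
    unfolding G_eq int_op_eq m_def
    by (rule abs_integral_mult_diff_le[OF f measurable_kernel_left kernel_bound(2) _ Ks_bound])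
      (use approx in \<open>simp_all add: Ks_def[abs_def]\<close>)
  have "\<bar>G x\<bar> \<le> kernel_bound * m + e' * m" for x
    using approx_G[of x] abs_int_op_le[OF f, of x] unfolding m_def by linarith
  then have "\<bar>(\<integral>x. f x * int_op K M f x \<partial>M) - (\<integral>x. f x * G x \<partial>M)\<bar> \<le> e' * m * m"
    unfolding m_def
    by (intro abs_integral_mult_diff_le[OF f measurable_int_op[OF f] abs_int_op_le[OF f]])
      (use approx_G in \<open>simp_all add: m_def\<close>)
  moreover have "0 \<le> (\<integral>x. f x * G x \<partial>M)"
    unfolding G_def w_def integral_step_kernel(2)[of f P, OF f P]
    by (rule pos_def_kernel_quadratic_form_nonneg[OF pd])
  moreover have "e' * m * m \<le> e"
  proof -
    have "e * (m * m) \<le> e * (m * m + 1)" using \<open>e > 0\<close> by simp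
    then show ?thesis
      using \<open>0 \<le> m\<close> unfolding e'_def by (simp add: pos_divide_le_eq add_nonneg_pos)
  qed
  ultimately show "0 \<le> (\<integral>x. f x * int_op K M f x \<partial>M) + e" by linarith
qed

lemma density_finite_borel:
  assumes p: "integrable M p" and nonneg: "\<And>x. 0 \<le> p x"
  shows "finite_borel (density M (\<lambda>x. ennreal (p x)))"
    and "measure (density M (\<lambda>x. ennreal (p x))) UNIV = (\<integral>x. p x \<partial>M)"
    and "(\<integral>t. K t x \<partial>density M (\<lambda>x. ennreal (p x))) = (\<integral>t. p t * K t x \<partial>M)"
proof -
  have [measurable]: "p \<in> borel_measurable M" using p by auto
  have total: "emeasure (density M (\<lambda>x. ennreal (p x))) UNIV = ennreal (\<integral>x. p x \<partial>M)"
    using emeasure_density[of p M UNIV] nn_integral_eq_integral[OF p] nonneg sets.top[of M] by simp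
  show "finite_borel (density M (\<lambda>x. ennreal (p x)))"
    unfolding finite_borel_def using total sets_eq_borel by (auto intro: finite_measureI)
  show "measure (density M (\<lambda>x. ennreal (p x))) UNIV = (\<integral>x. p x \<partial>M)"
    unfolding measure_def total using nonneg by (simp add: integral_nonneg_AE)
  show "(\<integral>t. K t x \<partial>density M (\<lambda>x. ennreal (p x))) = (\<integral>t. p t * K t x \<partial>M)"
    using nonneg by (subst integral_density) auto
qed

lemma int_op_eq_f_meas:
  assumes g: "integrable M g"
  obtains \<mu>1 \<mu>2 where "finite_borel \<mu>1" "finite_borel \<mu>2" "f_meas K \<mu>1 \<mu>2 = int_op K M g"
    "tot_var \<mu>1 \<mu>2 \<le> (\<integral>x. \<bar>g x\<bar> \<partial>M)"
proof -
  define p where "p x = max (g x) 0" for x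
  define q where "q x = max (- g x) 0" for x
  have pq: "integrable M p" "integrable M q" "\<And>x. 0 \<le> p x" "\<And>x. 0 \<le> q x"
    unfolding p_def q_def using g by (auto intro: integrable_max)
  note P = density_finite_borel[OF pq(1,3)] and Q = density_finite_borel[OF pq(2,4)]
  define \<mu>1 where "\<mu>1 = density M (\<lambda>x. ennreal (p x))"
  define \<mu>2 where "\<mu>2 = density M (\<lambda>x. ennreal (q x))"
  have "f_meas K \<mu>1 \<mu>2 x = (\<integral>t. p t * K t x - q t * K t x \<partial>M)" for x
    unfolding f_meas_def \<mu>1_def \<mu>2_def P(3) Q(3)
    using integrable_kernel_mult[OF pq(1)] integrable_kernel_mult[OF pq(2)] by simp
  also have "\<dots> x = int_op K M g x" for x
    unfolding int_op_eq p_def q_def by (rule Bochner_Integration.integral_cong) (auto simp: max_def)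
  finally have "f_meas K \<mu>1 \<mu>2 = int_op K M g" by (rule ext)
  moreover have "tot_var \<mu>1 \<mu>2 \<le> (\<integral>x. \<bar>g x\<bar> \<partial>M)"
  proof -
    have "tot_var \<mu>1 \<mu>2 \<le> (\<integral>x. p x \<partial>M) + (\<integral>x. q x \<partial>M)"
      using tot_var_bounds(2)[OF P(1) Q(1)] unfolding \<mu>1_def \<mu>2_def P(2) Q(2) .
    also have "\<dots> = (\<integral>x. p x + q x \<partial>M)" using pq by simp
    also have "\<dots> = (\<integral>x. \<bar>g x\<bar> \<partial>M)"
      unfolding p_def q_def by (rule Bochner_Integration.integral_cong) (auto simp: max_def)
    finally show ?thesis .
  qed
  ultimately show ?thesis using that P(1) Q(1) unfolding \<mu>1_def \<mu>2_def by blast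
qed

end

section \<open>Least squares regression\<close>

locale regression_model = prob_space R for R :: "('a::metric_space \<times> real) measure" +
  fixes fr :: "'a \<Rightarrow> real"
  assumes sets_R: "sets R = sets borel"
    and second_moment: "integrable R (\<lambda>z. (snd z)^2)"
    and regression: "regression_fun R fr"
begin

lemma space_R [simp]: "space R = UNIV"
  using sets_eq_imp_space_eq[OF sets_R] by simp

lemma measurable_fst_R [measurable]: "fst \<in> measurable R borel"
  and measurable_snd_R [measurable]: "snd \<in> borel_measurable R"
  using measurable_cong_sets[OF sets_R refl, of borel]
    borel_measurable_continuous_onI[OF continuous_on_fst[OF continuous_on_id]]
    borel_measurable_continuous_onI[OF continuous_on_snd[OF continuous_on_id]]
  by auto

lemma measurable_regression [measurable]: "fr \<in> borel_measurable borel"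
  using regression unfolding regression_fun_def by simp

lemma prob_space_marginal: "prob_space (marginal R)"
  unfolding marginal_def by (rule prob_space_distr) simp

lemma sets_marginal: "sets (marginal R) = sets borel"
  unfolding marginal_def by simp

lemma integral_marginal:
  fixes g :: "'a \<Rightarrow> real"
  shows "g \<in> borel_measurable borel \<Longrightarrow> (\<integral>x. g x \<partial>marginal R) = (\<integral>z. g (fst z) \<partial>R)"
  unfolding marginal_def by (rule integral_distr[OF measurable_fst_R])

lemma sq_int_marginal_iff:
  "g \<in> borel_measurable borel \<Longrightarrow> sq_int (marginal R) g \<longleftrightarrow> sq_int R (\<lambda>z. g (fst z))"
  unfolding sq_int_def marginal_def using integrable_distr_eq[OF measurable_fst_R, of "\<lambda>x. (g x)^2"]
  by auto

definition first_coordinate_events :: "('a \<times> real) measure" where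
  "first_coordinate_events = vimage_algebra (space R) fst borel"

lemma sigma_finite_first_coordinate_events:
  "sigma_finite_subalgebra R first_coordinate_events"
proof -
  have "subalgebra R first_coordinate_events"
    unfolding subalgebra_def first_coordinate_events_def
    using sets_image_in_sets[OF refl measurable_fst_R] by simp
  then show ?thesis
    by (intro finite_measure_subalgebra_is_sigma_finite)
      (simp add: finite_measure_subalgebra_def finite_measure_subalgebra_axioms_def finite_measure_axioms)
qed

lemma measurable_first_coordinate_events:
  "g \<in> borel_measurable borel \<Longrightarrow> (\<lambda>z. g (fst z)) \<in> borel_measurable first_coordinate_events"
  unfolding first_coordinate_events_def
  by (rule measurable_compose[OF measurable_vimage_algebra1]) auto

lemma regression_eq_cond_exp:
  "AE z in R. fr (fst z) = real_cond_exp R first_coordinate_events snd z"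
  using regression unfolding regression_fun_def first_coordinate_events_def by auto

lemma sq_int_regression: "sq_int (marginal R) fr"
proof -
  interpret sigma_finite_subalgebra R first_coordinate_events
    by (rule sigma_finite_first_coordinate_events)
  have "integrable R snd"
    by (rule square_integrable_imp_integrable[OF measurable_snd_R second_moment])
  then have "AE z in R. (real_cond_exp R first_coordinate_events snd z)^2
      \<le> real_cond_exp R first_coordinate_events (\<lambda>z. (snd z)^2) z"
    using real_cond_exp_jensens_inequality(2)[of snd UNIV _ _ power2] second_moment convex_power2
    by auto
  then have "integrable R (\<lambda>z. (real_cond_exp R first_coordinate_events snd z)^2)"
    by (intro Bochner_Integration.integrable_bound[OF real_cond_exp_int(1)[OF second_moment]])
      (auto elim!: AE_mp)
  then have "integrable R (\<lambda>z. (fr (fst z))^2)"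
    by (rule integrable_cong_AE_imp) (use regression_eq_cond_exp in \<open>auto elim!: AE_mp\<close>)
  then have "sq_int R (\<lambda>z. fr (fst z))" unfolding sq_int_def by simp
  then show ?thesis using sq_int_marginal_iff[OF measurable_regression] by simp
qed

text \<open>The cross term vanishes because \<open>f\<^sub>\<rho>(X) = E[Y | X]\<close>.\<close>

lemma ls_error_excess:
  assumes f: "f \<in> borel_measurable borel" "sq_int (marginal R) f"
  shows "ls_error R f - ls_error R fr = (\<integral>x. (f x - fr x)^2 \<partial>marginal R)"
proof -
  interpret sigma_finite_subalgebra R first_coordinate_events
    by (rule sigma_finite_first_coordinate_events)
  interpret marginal: prob_space "marginal R" by (rule prob_space_marginal)
  define w where "w x = f x - fr x" for x
  have [measurable]: "w \<in> borel_measurable borel" unfolding w_def using f by measurable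
  have W: "sq_int R (\<lambda>z. w (fst z))"
    using marginal.sq_int_diff[OF f(2) sq_int_regression] f(1)
    unfolding w_def by (simp add: sq_int_marginal_iff)
  have C: "sq_int R (\<lambda>z. fr (fst z))"
    using sq_int_regression by (simp add: sq_int_marginal_iff)
  have Y: "sq_int R snd" using second_moment unfolding sq_int_def by simp
  have CY: "sq_int R (\<lambda>z. fr (fst z) - snd z)" by (rule sq_int_diff[OF C Y])
  have cross: "(\<integral>z. w (fst z) * (fr (fst z) - snd z) \<partial>R) = 0"
  proof -
    have "(\<integral>z. w (fst z) * fr (fst z) \<partial>R)
        = (\<integral>z. w (fst z) * real_cond_exp R first_coordinate_events snd z \<partial>R)"
      by (rule integral_cong_AE) (use regression_eq_cond_exp in \<open>auto elim!: AE_mp\<close>)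
    also have "\<dots> = (\<integral>z. w (fst z) * snd z \<partial>R)"
      by (rule real_cond_exp_intg(2)[OF sq_int_integrable_mult[OF W Y]
            measurable_first_coordinate_events measurable_snd_R]) measurable
    finally show ?thesis
      using sq_int_integrable_mult[OF W C] sq_int_integrable_mult[OF W Y]
      by (simp add: right_diff_distrib)
  qed
  have "ls_error R f = (\<integral>z. (w (fst z))^2 + 2 * (w (fst z) * (fr (fst z) - snd z))
      + (fr (fst z) - snd z)^2 \<partial>R)"
    unfolding ls_error_def w_def by (simp add: power2_eq_square algebra_simps)
  also have "\<dots> = (\<integral>z. (w (fst z))^2 \<partial>R) + ls_error R fr"
    using sq_int_integrable_square[OF W] sq_int_integrable_mult[OF W CY] sq_int_integrable_square[OF CY]
    unfolding ls_error_def by (simp add: cross)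
  moreover have "(\<lambda>x. (w x)^2) \<in> borel_measurable borel" by measurable
  ultimately show ?thesis by (simp add: integral_marginal w_def)
qed

end

section \<open>The approximation error under a source condition\<close>

locale source_condition =
  regression_model R fr + marginal: prob_space "marginal R" + kernel: compact_kernel "marginal R" K + onb: orthonormal_system "marginal R" \<phi>
  for R :: "('a::metric_space \<times> real) measure" and fr K \<phi> +
  fixes lam :: "nat \<Rightarrow> real" and s :: real and h :: "'a \<Rightarrow> real"
  assumes pos_def: "pos_def_kernel K"
    and eigen: "\<And>j. AE x in marginal R. int_op K (marginal R) (\<phi> j) x = lam j * \<phi> j x"
    and lam_decreasing: "\<And>j. lam (Suc j) \<le> lam j"
    and s_pos: "0 < s"
    and sq_int_source: "sq_int (marginal R) h"
    and source_expansion: "(\<lambda>n. L2_norm_m (marginal R)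
          (\<lambda>x. fr x - (\<Sum>j<n. lam j powr s * (\<integral>t. h t * \<phi> j t \<partial>marginal R) * \<phi> j x))) \<longlonglongrightarrow> 0"
begin

abbreviation \<nu> :: "'a measure" where "\<nu> \<equiv> marginal R"

definition coeff :: "nat \<Rightarrow> real" where
  "coeff j = (\<integral>t. h t * \<phi> j t \<partial>\<nu>)"

definition source_norm_sq :: real where
  "source_norm_sq = (\<integral>x. (h x)^2 \<partial>\<nu>)"

definition expansion :: "nat \<Rightarrow> 'a \<Rightarrow> real" where
  "expansion n x = (\<Sum>j<n. lam j powr s * coeff j * \<phi> j x)"

definition regularized_error :: "real \<Rightarrow> 'a measure \<Rightarrow> 'a measure \<Rightarrow> real" where
  "regularized_error lamb \<mu>1 \<mu>2 = ls_error R (f_meas K \<mu>1 \<mu>2) - ls_error R fr + lamb * tot_var \<mu>1 \<mu>2"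

definition inf_regularized_error :: "real \<Rightarrow> real" where
  "inf_regularized_error lamb =
     Inf {regularized_error lamb \<mu>1 \<mu>2 | \<mu>1 \<mu>2. finite_borel \<mu>1 \<and> finite_borel \<mu>2}"

lemma measurable_regression_marginal [measurable]: "fr \<in> borel_measurable \<nu>"
  using measurable_regression measurable_cong_sets[OF sets_marginal refl] by blast

lemma source_norm_sq_nonneg: "0 \<le> source_norm_sq"
  unfolding source_norm_sq_def by simp

lemma expansion_L2_tendsto: "(\<lambda>n. \<integral>x. (expansion n x - fr x)^2 \<partial>\<nu>) \<longlonglongrightarrow> 0"
proof -
  have "(\<lambda>n. (L2_norm_m \<nu> (\<lambda>x. fr x - expansion n x))^2) \<longlonglongrightarrow> 0^2"
    using source_expansion unfolding expansion_def coeff_def by (intro tendsto_intros)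
  then show ?thesis unfolding L2_norm_m_def by (simp add: power2_commute)
qed

lemma eigenvalue_nonneg: "0 \<le> lam j"
proof -
  have "0 \<le> (\<integral>x. \<phi> j x * int_op K \<nu> (\<phi> j) x \<partial>\<nu>)"
    by (rule kernel.integral_mult_int_op_nonneg[OF pos_def onb.integrable_basis])
  also have "\<dots> = (\<integral>x. lam j * (\<phi> j x * \<phi> j x) \<partial>\<nu>)"
  proof (rule integral_cong_AE)
    show "(\<lambda>x. \<phi> j x * int_op K \<nu> (\<phi> j) x) \<in> borel_measurable \<nu>"
      using kernel.measurable_int_op[OF onb.integrable_basis] by measurable
  qed (use eigen[of j] in \<open>auto elim!: AE_mp\<close>)
  also have "\<dots> = lam j" by (simp add: onb.orthonormal)
  finally show ?thesis .
qed

lemma eigenvalue_le_first: "lam j \<le> lam 0"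
  by (induction j) (use lam_decreasing order_trans in auto)

lemma int_op_combination:
  "AE x in \<nu>. int_op K \<nu> (\<lambda>t. \<Sum>j<n. c j * \<phi> j t) x = (\<Sum>j<n. c j * lam j * \<phi> j x)"
proof -
  have "AE x in \<nu>. \<forall>j\<in>{..<n}. int_op K \<nu> (\<phi> j) x = lam j * \<phi> j x"
    by (rule AE_finite_allI) (auto intro: eigen)
  then show ?thesis
    by eventually_elim (simp add: kernel.int_op_sum[OF onb.integrable_basis] mult.assoc)
qed

lemma regularized_error_le:
  assumes g: "integrable \<nu> g" and "0 \<le> lamb"
  obtains \<mu>1 \<mu>2 where "finite_borel \<mu>1" "finite_borel \<mu>2" "f_meas K \<mu>1 \<mu>2 = int_op K \<nu> g"
    "regularized_error lamb \<mu>1 \<mu>2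
       \<le> (\<integral>x. (int_op K \<nu> g x - fr x)^2 \<partial>\<nu>) + lamb * (\<integral>x. \<bar>g x\<bar> \<partial>\<nu>)"
proof -
  obtain \<mu>1 \<mu>2 where \<mu>: "finite_borel \<mu>1" "finite_borel \<mu>2" "f_meas K \<mu>1 \<mu>2 = int_op K \<nu> g"
    and tv: "tot_var \<mu>1 \<mu>2 \<le> (\<integral>x. \<bar>g x\<bar> \<partial>\<nu>)"
    by (rule kernel.int_op_eq_f_meas[OF g])
  have "int_op K \<nu> g \<in> borel_measurable borel"
    using kernel.measurable_int_op[OF g] kernel.measurable_iff_borel by blast
  then have "ls_error R (f_meas K \<mu>1 \<mu>2) - ls_error R fr = (\<integral>x. (int_op K \<nu> g x - fr x)^2 \<partial>\<nu>)"
    unfolding \<mu>(3) by (rule ls_error_excess[OF _ kernel.sq_int_int_op[OF g]])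
  moreover have "lamb * tot_var \<mu>1 \<mu>2 \<le> lamb * (\<integral>x. \<bar>g x\<bar> \<partial>\<nu>)"
    using tv \<open>0 \<le> lamb\<close> by (rule mult_left_mono)
  ultimately show ?thesis using that \<mu> unfolding regularized_error_def by simp
qed

lemma regression_in_range:
  assumes "1 \<le> s"
  obtains g where "integrable \<nu> g" "AE x in \<nu>. fr x = int_op K \<nu> g x"
    "(\<integral>x. \<bar>g x\<bar> \<partial>\<nu>) \<le> lam 0 powr (s - 1) * sqrt source_norm_sq"
proof -
  define L where "L = lam 0 powr (s - 1)"
  define c where "c j = lam j powr (s - 1) * coeff j" for j
  define G where "G n x = (\<Sum>j<n. c j * \<phi> j x)" for n x
  have c_le: "\<bar>c j\<bar> \<le> L * \<bar>coeff j\<bar>" for j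
    unfolding c_def L_def abs_mult using assms eigenvalue_nonneg eigenvalue_le_first
    by (intro mult_right_mono) (auto intro: powr_mono2)
  have c_lam: "c j * lam j = lam j powr s * coeff j" for j
    using eigenvalue_nonneg[of j] s_pos unfolding c_def
    by (cases "lam j = 0") (auto simp: powr_diff)
  have "summable (\<lambda>j. (c j)^2)"
    by (rule onb.summable_square_of_dominated[OF sq_int_source _ powr_ge_zero])
      (use c_le in \<open>simp add: coeff_def L_def\<close>)
  obtain g where g: "integrable \<nu> g" and L1: "(\<lambda>n. \<integral>x. \<bar>g x - G n x\<bar> \<partial>\<nu>) \<longlonglongrightarrow> 0"
  proof (rule marginal.L2_Cauchy_L1_convergent[of G])
    show "sq_int \<nu> (G n)" for n unfolding G_def by (rule onb.sq_int_combination)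
    show "\<exists>N. \<forall>m\<ge>N. \<forall>n\<ge>N. (\<integral>x. (G m x - G n x)^2 \<partial>\<nu>) < e" if "e > 0" for e
      unfolding G_def by (rule onb.partial_sums_L2_Cauchy[OF \<open>summable _\<close> that])
  qed
  have G_int: "integrable \<nu> (G n)" for n
    unfolding G_def by (rule marginal.sq_int_integrable[OF onb.sq_int_combination])
  have G_L1: "(\<integral>x. \<bar>G n x\<bar> \<partial>\<nu>) \<le> L * sqrt source_norm_sq" for n
    unfolding G_def source_norm_sq_def coeff_def[symmetric]
    by (rule onb.integral_abs_combination_le[OF sq_int_source]) (use c_le in \<open>simp_all add: coeff_def L_def\<close>)
  have "(\<integral>x. \<bar>g x\<bar> \<partial>\<nu>) \<le> L * sqrt source_norm_sq"
    by (rule marginal.integral_abs_le_of_L1_limit[OF g G_int L1 G_L1])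
  moreover have "AE x in \<nu>. int_op K \<nu> g x = fr x"
  proof (rule marginal.AE_eq_of_uniform_L2_approx[OF kernel.sq_int_int_op[OF g] sq_int_regression])
    show "sq_int \<nu> (expansion n)" for n
      unfolding expansion_def by (rule onb.sq_int_combination)
    show "AE x in \<nu>. \<bar>int_op K \<nu> g x - expansion n x\<bar> \<le> kernel.kernel_bound * (\<integral>x. \<bar>g x - G n x\<bar> \<partial>\<nu>)" for n
      using int_op_combination[of c n]
    proof eventually_elim
      case (elim x)
      then have "expansion n x = int_op K \<nu> (G n) x"
        unfolding expansion_def G_def by (simp add: c_lam mult.commute)
      then show ?case using kernel.abs_int_op_diff_le[OF g G_int] by simp
    qed
    show "(\<lambda>n. kernel.kernel_bound * (\<integral>x. \<bar>g x - G n x\<bar> \<partial>\<nu>)) \<longlonglongrightarrow> 0"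
      using tendsto_mult_right_zero[OF L1] by simp
  qed (rule expansion_L2_tendsto)
  then have "AE x in \<nu>. fr x = int_op K \<nu> g x" by eventually_elim simp
  ultimately show ?thesis using that[OF g] unfolding L_def by blast
qed

lemma regularized_error_regression_le:
  assumes "1 \<le> s" "0 < lamb"
  shows "\<exists>\<mu>1 \<mu>2. finite_borel \<mu>1 \<and> finite_borel \<mu>2 \<and> (AE x in \<nu>. fr x = f_meas K \<mu>1 \<mu>2 x) \<and>
           regularized_error lamb \<mu>1 \<mu>2 \<le> lam 0 powr (s - 1) * L2_norm_m \<nu> h * lamb"
proof -
  obtain g where g: "integrable \<nu> g" and fr_eq: "AE x in \<nu>. fr x = int_op K \<nu> g x"
    and g_L1: "(\<integral>x. \<bar>g x\<bar> \<partial>\<nu>) \<le> lam 0 powr (s - 1) * sqrt source_norm_sq"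
    by (rule regression_in_range[OF assms(1)])
  obtain \<mu>1 \<mu>2 where \<mu>: "finite_borel \<mu>1" "finite_borel \<mu>2" "f_meas K \<mu>1 \<mu>2 = int_op K \<nu> g"
    and err: "regularized_error lamb \<mu>1 \<mu>2
       \<le> (\<integral>x. (int_op K \<nu> g x - fr x)^2 \<partial>\<nu>) + lamb * (\<integral>x. \<bar>g x\<bar> \<partial>\<nu>)"
    by (rule regularized_error_le[OF g less_imp_le[OF assms(2)]])
  have "(\<integral>x. (int_op K \<nu> g x - fr x)^2 \<partial>\<nu>) = 0"
    using fr_eq by (intro integral_eq_zero_AE) (auto elim!: AE_mp)
  then have "regularized_error lamb \<mu>1 \<mu>2
      \<le> lamb * (\<integral>x. \<bar>g x\<bar> \<partial>\<nu>)"
    using err by simp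
  also have "\<dots> \<le> lamb * (lam 0 powr (s - 1) * sqrt source_norm_sq)"
    using g_L1 assms(2) by (simp add: mult_left_mono)
  finally have "regularized_error lamb \<mu>1 \<mu>2
      \<le> lamb * (lam 0 powr (s - 1) * sqrt source_norm_sq)" .
  then show ?thesis
    using \<mu> fr_eq unfolding L2_norm_m_def source_norm_sq_def
    by (intro exI[of _ \<mu>1] exI[of _ \<mu>2]) (simp add: mult_ac)
qed

lemma bdd_below_regularized_errors:
  assumes "0 \<le> lamb"
  shows "bdd_below {regularized_error lamb \<mu>1 \<mu>2 | \<mu>1 \<mu>2. finite_borel \<mu>1 \<and> finite_borel \<mu>2}"
proof (rule bdd_belowI[of _ "- ls_error R fr"], safe)
  fix \<mu>1 \<mu>2 :: "'a measure" assume "finite_borel \<mu>1" "finite_borel \<mu>2"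
  then have "0 \<le> lamb * tot_var \<mu>1 \<mu>2" by (intro mult_nonneg_nonneg assms tot_var_bounds(1))
  moreover have "0 \<le> ls_error R (f_meas K \<mu>1 \<mu>2)" unfolding ls_error_def by simp
  ultimately show "- ls_error R fr \<le> regularized_error lamb \<mu>1 \<mu>2"
    unfolding regularized_error_def by linarith
qed

lemma spectral_filter_coeff_le:
  assumes s: "s < 1" and t: "0 < t"
  shows "\<bar>lam j powr s * coeff j / (lam j + t)\<bar> \<le> t powr (s - 1) * \<bar>coeff j\<bar>"
    and "\<bar>lam j powr s * coeff j - lam j powr s * coeff j / (lam j + t) * lam j\<bar> \<le> t powr s * \<bar>coeff j\<bar>"
proof -
  have pos: "0 < lam j + t" using eigenvalue_nonneg[of j] t by simp
  have "\<bar>lam j powr s * coeff j / (lam j + t)\<bar> = \<bar>coeff j\<bar> * (lam j powr s / (lam j + t))"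
    using pos by (simp add: abs_mult)
  also have "\<dots> \<le> \<bar>coeff j\<bar> * t powr (s - 1)"
    by (rule mult_left_mono[OF powr_filter_le'[OF eigenvalue_nonneg t s_pos less_imp_le[OF s]]]) simp
  finally show "\<bar>lam j powr s * coeff j / (lam j + t)\<bar> \<le> t powr (s - 1) * \<bar>coeff j\<bar>"
    by (simp add: mult.commute)
  have "\<bar>lam j powr s * coeff j - lam j powr s * coeff j / (lam j + t) * lam j\<bar>
      = \<bar>coeff j\<bar> * (lam j powr s * t / (lam j + t))"
    using pos t by (simp add: field_simps abs_mult)
  also have "\<dots> \<le> \<bar>coeff j\<bar> * t powr s"
    by (rule mult_left_mono[OF powr_filter_le[OF eigenvalue_nonneg t s_pos less_imp_le[OF s]]]) simp
  finally show "\<bar>lam j powr s * coeff j - lam j powr s * coeff j / (lam j + t) * lam j\<bar>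
      \<le> t powr s * \<bar>coeff j\<bar>"
    by (simp add: mult.commute)
qed

lemma spectral_filter_approximation:
  assumes s: "s < 1" and t: "0 < t" and \<eta>: "0 < \<eta>"
  obtains g where "integrable \<nu> g"
    "(\<integral>x. (int_op K \<nu> g x - fr x)^2 \<partial>\<nu>)
       \<le> (1 + \<eta>) * (\<integral>x. (expansion n x - fr x)^2 \<partial>\<nu>) + (1 + 1 / \<eta>) * ((t powr s)^2 * source_norm_sq)"
    "(\<integral>x. \<bar>g x\<bar> \<partial>\<nu>) \<le> t powr (s - 1) * sqrt source_norm_sq"
proof -
  define c where "c j = lam j powr s * coeff j / (lam j + t)" for j
  define d where "d j = lam j powr s * coeff j - c j * lam j" for j
  define g where "g x = (\<Sum>j<n. c j * \<phi> j x)" for x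
  define V where "V x = (\<Sum>j<n. d j * \<phi> j x)" for x
  have g_int: "integrable \<nu> g"
    unfolding g_def by (rule marginal.sq_int_integrable[OF onb.sq_int_combination])
  have AE_op: "AE x in \<nu>. int_op K \<nu> g x - fr x = (expansion n x - fr x) + - V x"
    using int_op_combination[of c n] unfolding g_def
    by eventually_elim (simp add: expansion_def V_def d_def sum_subtractf algebra_simps)
  have "(\<integral>x. (int_op K \<nu> g x - fr x)^2 \<partial>\<nu>) = (\<integral>x. ((expansion n x - fr x) + - V x)^2 \<partial>\<nu>)"
  proof (rule integral_cong_AE)
    show "(\<lambda>x. (int_op K \<nu> g x - fr x)^2) \<in> borel_measurable \<nu>"
      using kernel.measurable_int_op[OF g_int] by measurable
    show "(\<lambda>x. ((expansion n x - fr x) + - V x)^2) \<in> borel_measurable \<nu>"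
      unfolding expansion_def V_def by measurable
    show "AE x in \<nu>. (int_op K \<nu> g x - fr x)^2 = ((expansion n x - fr x) + - V x)^2"
      using AE_op by eventually_elim (simp only:)
  qed
  also have "\<dots> \<le> (1 + \<eta>) * (\<integral>x. (expansion n x - fr x)^2 \<partial>\<nu>) + (1 + 1 / \<eta>) * (\<integral>x. (V x)^2 \<partial>\<nu>)"
    using marginal.integral_square_add_le[OF _ _ \<eta>,
        of "\<lambda>x. expansion n x - fr x" "\<lambda>x. - V x"]
      marginal.sq_int_diff[OF _ sq_int_regression] onb.sq_int_combination
    unfolding expansion_def V_def by (simp add: marginal.sq_int_cmult[of _ "-1", simplified])
  also have "(\<integral>x. (V x)^2 \<partial>\<nu>) \<le> (t powr s)^2 * source_norm_sq"
    unfolding V_def source_norm_sq_def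
    by (rule onb.integral_combination_square_le[OF sq_int_source])
      (use spectral_filter_coeff_le(2)[OF s t] in \<open>simp_all add: coeff_def d_def c_def\<close>)
  finally have "(\<integral>x. (int_op K \<nu> g x - fr x)^2 \<partial>\<nu>)
      \<le> (1 + \<eta>) * (\<integral>x. (expansion n x - fr x)^2 \<partial>\<nu>) + (1 + 1 / \<eta>) * ((t powr s)^2 * source_norm_sq)"
    using \<eta> by (simp add: mult_left_mono)
  moreover have "(\<integral>x. \<bar>g x\<bar> \<partial>\<nu>) \<le> t powr (s - 1) * sqrt source_norm_sq"
    unfolding g_def source_norm_sq_def
    by (rule onb.integral_abs_combination_le[OF sq_int_source])
      (use spectral_filter_coeff_le(1)[OF s t] in \<open>simp_all add: coeff_def c_def\<close>)
  ultimately show ?thesis using that g_int by blast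
qed

lemma inf_regularized_error_le_filter:
  assumes s: "s < 1" and lamb: "0 < lamb" and t: "0 < t" and \<eta>: "0 < \<eta>"
  shows "inf_regularized_error lamb
    \<le> (1 + \<eta>) * (\<integral>x. (expansion n x - fr x)^2 \<partial>\<nu>)
       + (1 + 1 / \<eta>) * ((t powr s)^2 * source_norm_sq) + lamb * (t powr (s - 1) * sqrt source_norm_sq)"
proof -
  obtain g where g: "integrable \<nu> g"
    and err: "(\<integral>x. (int_op K \<nu> g x - fr x)^2 \<partial>\<nu>)
       \<le> (1 + \<eta>) * (\<integral>x. (expansion n x - fr x)^2 \<partial>\<nu>) + (1 + 1 / \<eta>) * ((t powr s)^2 * source_norm_sq)"
    and g_L1: "(\<integral>x. \<bar>g x\<bar> \<partial>\<nu>) \<le> t powr (s - 1) * sqrt source_norm_sq"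
    by (rule spectral_filter_approximation[OF s t \<eta>])
  obtain \<mu>1 \<mu>2 where \<mu>: "finite_borel \<mu>1" "finite_borel \<mu>2"
    and D: "regularized_error lamb \<mu>1 \<mu>2
       \<le> (\<integral>x. (int_op K \<nu> g x - fr x)^2 \<partial>\<nu>) + lamb * (\<integral>x. \<bar>g x\<bar> \<partial>\<nu>)"
    by (rule regularized_error_le[OF g less_imp_le[OF lamb]])
  have "inf_regularized_error lamb \<le> regularized_error lamb \<mu>1 \<mu>2"
    unfolding inf_regularized_error_def using \<mu>
    by (intro cInf_lower bdd_below_regularized_errors) (auto simp: less_imp_le[OF lamb])
  moreover have "lamb * (\<integral>x. \<bar>g x\<bar> \<partial>\<nu>) \<le> lamb * (t powr (s - 1) * sqrt source_norm_sq)"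
    using g_L1 lamb by (simp add: mult_left_mono)
  ultimately show ?thesis using err D by linarith
qed

lemma inf_regularized_error_le:
  assumes s: "s < 1" and lamb: "0 < lamb"
  shows "inf_regularized_error lamb
    \<le> (L2_norm_m \<nu> h + (L2_norm_m \<nu> h)^2) * lamb powr (2 * s / (1 + s))"
proof -
  define t where "t = lamb powr (1 / (1 + s))"
  define T where "T = lamb powr (2 * s / (1 + s))"
  define H where "H = source_norm_sq"
  have "0 < t" unfolding t_def using lamb by simp
  have t_powr: "t powr r = lamb powr (r / (1 + s))" for r
    unfolding t_def using lamb by (simp add: powr_powr)
  have T_eq: "(t powr s)^2 = T" "lamb * t powr (s - 1) = T"
  proof -
    show "(t powr s)^2 = T"
      unfolding power2_eq_square powr_add[symmetric] t_powr T_def by simp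
    have "lamb = t powr (1 + s)" unfolding t_powr using s_pos lamb by simp
    then have "lamb * t powr (s - 1) = t powr ((1 + s) + (s - 1))" by (simp only: powr_add)
    then show "lamb * t powr (s - 1) = T" unfolding t_powr T_def by simp
  qed
  have bound: "inf_regularized_error lamb \<le> (1 + 1 / \<eta>) * (T * H) + T * sqrt H" if "0 < \<eta>" for \<eta>
  proof (rule LIMSEQ_le_const)
    have "(\<lambda>n. (1 + \<eta>) * (\<integral>x. (expansion n x - fr x)^2 \<partial>\<nu>) + (1 + 1 / \<eta>) * (T * H) + T * sqrt H)
        \<longlonglongrightarrow> (1 + \<eta>) * 0 + (1 + 1 / \<eta>) * (T * H) + T * sqrt H"
      by (intro tendsto_intros expansion_L2_tendsto)
    then show "(\<lambda>n. (1 + \<eta>) * (\<integral>x. (expansion n x - fr x)^2 \<partial>\<nu>) + (1 + 1 / \<eta>) * (T * H) + T * sqrt H)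
        \<longlonglongrightarrow> (1 + 1 / \<eta>) * (T * H) + T * sqrt H" by simp
    have "inf_regularized_error lamb \<le> (1 + \<eta>) * (\<integral>x. (expansion n x - fr x)^2 \<partial>\<nu>) + (1 + 1 / \<eta>) * (T * H) + T * sqrt H" for n
      using inf_regularized_error_le_filter[OF s lamb \<open>0 < t\<close> that, of n]
      unfolding H_def T_eq(1) mult.assoc[symmetric, of lamb] T_eq(2) .
    then show "\<exists>N. \<forall>n\<ge>N. inf_regularized_error lamb \<le> (1 + \<eta>) * (\<integral>x. (expansion n x - fr x)^2 \<partial>\<nu>) + (1 + 1 / \<eta>) * (T * H) + T * sqrt H"
      by blast
  qed
  have "inf_regularized_error lamb \<le> T * H + T * sqrt H"
  proof (rule LIMSEQ_le_const)
    have "(\<lambda>n. (1 + inverse (real (Suc n))) * (T * H) + T * sqrt H) \<longlonglongrightarrow> (1 + 0) * (T * H) + T * sqrt H"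
      by (intro tendsto_intros LIMSEQ_inverse_real_of_nat)
    then show "(\<lambda>n. (1 + inverse (real (Suc n))) * (T * H) + T * sqrt H) \<longlonglongrightarrow> T * H + T * sqrt H"
      by simp
    show "\<exists>N. \<forall>n\<ge>N. inf_regularized_error lamb \<le> (1 + inverse (real (Suc n))) * (T * H) + T * sqrt H"
      using bound[of "real (Suc _)"] by (simp add: divide_inverse)
  qed
  then show ?thesis
    unfolding T_def H_def source_norm_sq_def L2_norm_m_def using source_norm_sq_nonneg
    by (simp add: algebra_simps source_norm_sq_def)
qed

end

theorem lemma3p2:
  fixes \<rho> :: "('a::metric_space \<times> real) measure"
    and K :: "'a \<Rightarrow> 'a \<Rightarrow> real"
    and f\<rho> h :: "'a \<Rightarrow> real"
    and \<phi> :: "nat \<Rightarrow> 'a \<Rightarrow> real"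
    and lam :: "nat \<Rightarrow> real"
    and s lamb :: real
  assumes X_compact: "compact (UNIV :: 'a set)"
    and rho_prob: "prob_space \<rho>"
    and rho_borel: "sets \<rho> = sets (borel :: ('a \<times> real) measure)"
    and second_moment: "integrable \<rho> (\<lambda>z. (snd z)^2)"
    and f_reg: "regression_fun \<rho> f\<rho>"
    and K_cont: "continuous_on UNIV (\<lambda>(x, y). K x y)"
    and K_pd: "pos_def_kernel K"
    and K_dense: "closure (span (range (\<lambda>x. Bcontfun (\<lambda>t. K t x)))) = (UNIV :: ('a \<Rightarrow>\<^sub>C real) set)"
    and onb: "L2_onb (marginal \<rho>) \<phi>"
    and eig: "\<And>j. AE x in marginal \<rho>. int_op K (marginal \<rho>) (\<phi> j) x = lam j * \<phi> j x"
    and lam_dec: "\<And>j. lam (Suc j) \<le> lam j"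
    and s_pos: "s > 0"
    and h_L2: "sq_int (marginal \<rho>) h"
    and f_expansion: "(\<lambda>n. L2_norm_m (marginal \<rho>)
          (\<lambda>x. f\<rho> x - (\<Sum>j<n. lam j powr s * (\<integral>t. h t * \<phi> j t \<partial>marginal \<rho>) * \<phi> j x)))
        \<longlonglongrightarrow> 0"
    and lam_pos: "lamb > 0"
  shows "(s < 1 \<longrightarrow>
           Inf {ls_error \<rho> (f_meas K \<mu>1 \<mu>2) - ls_error \<rho> f\<rho> + lamb * tot_var \<mu>1 \<mu>2 | \<mu>1 \<mu>2.
                  finite_borel \<mu>1 \<and> finite_borel \<mu>2}
           \<le> (L2_norm_m (marginal \<rho>) h + (L2_norm_m (marginal \<rho>) h)^2) * lamb powr (2 * s / (1 + s)))
       \<and> (s \<ge> 1 \<longrightarrow>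
           (\<exists>\<mu>1 \<mu>2. finite_borel \<mu>1 \<and> finite_borel \<mu>2 \<and>
              (AE x in marginal \<rho>. f\<rho> x = f_meas K \<mu>1 \<mu>2 x) \<and>
              ls_error \<rho> (f_meas K \<mu>1 \<mu>2) - ls_error \<rho> f\<rho> + lamb * tot_var \<mu>1 \<mu>2
                \<le> lam 0 powr (s - 1) * L2_norm_m (marginal \<rho>) h * lamb))"
proof -
  have R: "regression_model \<rho> f\<rho>"
    unfolding regression_model_def regression_model_axioms_def
    using rho_prob rho_borel second_moment f_reg by blast
  have "source_condition \<rho> f\<rho> K \<phi> lam s h"
    unfolding source_condition_def source_condition_axioms_def compact_kernel_def
      compact_kernel_axioms_def orthonormal_system_def orthonormal_system_axioms_def
    using R regression_model.prob_space_marginal[OF R] regression_model.sets_marginal[OF R]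
      onb K_cont X_compact K_pd eig lam_dec s_pos h_L2 f_expansion
    unfolding L2_onb_def by blast
  then interpret source_condition \<rho> f\<rho> K \<phi> lam s h .
  show ?thesis
    using inf_regularized_error_le regularized_error_regression_le lam_pos
    unfolding inf_regularized_error_def regularized_error_def by simp
qed

end
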